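(* Let $M_\varphi$ be a hyperbolic once-punctured torus bundle with fibre $S$, and let $\overline\rho\colon\pi_1(S)\to\mathrm{PSL}(2,\mathbb{C})$ be irreducible. If $\chi_{\overline\rho}\in\mathrm{im}(\overline r)$ and $|C(\mathrm{im}(\overline\rho))|=2$, then $|\overline r^{-1}(\chi_{\overline\rho})|=2$ and $b_1(\varphi)>1$. Moreover, either no character in $\overline r^{-1}(\chi_{\overline\rho})$ lifts to $X(M_\varphi)$; or exactly one lifts and $b_1(\varphi)=3$; or two of them lift and $b_1(\varphi)=2$.
   Context: $\pi_1(M_\varphi)=\langle t,a,b\mid t^{-1}at=\varphi(a),t^{-1}bt=\varphi(b)\rangle$ with $a,b$ free generators of $\pi_1(S)$; $b_1(\varphi)=\dim_{\mathbb{Z}_2}H_1(M_\varphi;\mathbb{Z}_2)$. $\overline X(N)$ is the $\mathrm{PSL}(2,\mathbb{C})$-character variety, $X(N)$ the $\mathrm{SL}(2,\mathbb{C})$-character variety; a character in $\overline X(M_\varphi)$ lifts to $X(M_\varphi)$ if it is the image of a point of $X(M_\varphi)$ under the map induced by $\mathrm{SL}(2,\mathbb{C})\to\mathrm{PSL}(2,\mathbb{C})$. $\overline r\colon\overline X(M_\varphi)\to\overline X(S)$ is restriction to $\pi_1(S)$. $C(\cdot)$ denotes centraliser in $\mathrm{PSL}(2,\mathbb{C})$. *)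

theory Defs
  imports "HOL-Analysis.Analysis"
begin

section \<open>Words: generators a, b of pi_1(S) and t of pi_1(M_phi)\<close>

datatype gen = Ga | Gb | Gt

type_synonym letter = "gen \<times> bool"   (* (g, False) = g, (g, True) = g^-1 *)
type_synonym word = "letter list"

definition letters :: "word \<Rightarrow> gen set" where
  "letters w = fst ` set w"

definition surface_word :: "word \<Rightarrow> bool" where
  "surface_word w \<longleftrightarrow> letters w \<subseteq> {Ga, Gb}"

definition winv :: "word \<Rightarrow> word" where
  "winv w = rev (map (\<lambda>(g, e). (g, \<not> e)) w)"

definition wsubst :: "(gen \<Rightarrow> word) \<Rightarrow> word \<Rightarrow> word" where
  "wsubst \<phi> w = concat (map (\<lambda>(g, e). if e then winv (\<phi> g) else \<phi> g) w)"

fun red :: "word \<Rightarrow> word" where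
  "red [] = []"
| "red (x # xs) = (case red xs of
      [] \<Rightarrow> [x]
    | y # ys \<Rightarrow> (if fst y = fst x \<and> snd y \<noteq> snd x then ys else x # y # ys))"

definition is_aut_F2 :: "(gen \<Rightarrow> word) \<Rightarrow> bool" where
  "is_aut_F2 \<phi> \<longleftrightarrow> surface_word (\<phi> Ga) \<and> surface_word (\<phi> Gb) \<and>
     (\<exists>\<psi>. surface_word (\<psi> Ga) \<and> surface_word (\<psi> Gb) \<and>
        (\<forall>g\<in>{Ga, Gb}. red (wsubst \<psi> (\<phi> g)) = [(g, False)] \<and>
                       red (wsubst \<phi> (\<psi> g)) = [(g, False)]))"

text \<open>Exponent sums and the induced matrix on H_1(S;Z) = Z^2.\<close>
definition expsum :: "gen \<Rightarrow> word \<Rightarrow> int" where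
  "expsum g w = (\<Sum>x\<leftarrow>w. if fst x = g then (if snd x then -1 else 1) else 0)"

definition ab_trace :: "(gen \<Rightarrow> word) \<Rightarrow> int" where
  "ab_trace \<phi> = expsum Ga (\<phi> Ga) + expsum Gb (\<phi> Gb)"

definition ab_det :: "(gen \<Rightarrow> word) \<Rightarrow> int" where
  "ab_det \<phi> = expsum Ga (\<phi> Ga) * expsum Gb (\<phi> Gb) - expsum Gb (\<phi> Ga) * expsum Ga (\<phi> Gb)"

text \<open>M_phi is a hyperbolic (orientable) once-punctured torus bundle: phi is an automorphism
  of pi_1(S) = F(a,b) whose action on H_1 is in SL(2,Z) with |trace| > 2 (Anosov; Thurston).\<close>
definition hyperbolic_bundle :: "(gen \<Rightarrow> word) \<Rightarrow> bool" where
  "hyperbolic_bundle \<phi> \<longleftrightarrow> is_aut_F2 \<phi> \<and> ab_det \<phi> = 1 \<and> \<bar>ab_trace \<phi>\<bar> > 2"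

text \<open>Homomorphisms pi_1(M_phi) \<rightarrow> Z_2 (Z_2 = bool with xor). Their number is
  2^(dim H^1(M_phi;Z_2)) = 2^(dim H_1(M_phi;Z_2)).\<close>
definition wpar :: "(gen \<Rightarrow> bool) \<Rightarrow> word \<Rightarrow> bool" where
  "wpar h w = foldr (\<lambda>x acc. h (fst x) \<noteq> acc) w False"

definition hom_Z2 :: "(gen \<Rightarrow> word) \<Rightarrow> (bool \<times> bool \<times> bool) set" where
  "hom_Z2 \<phi> = {(ta, xa, yb). let h = (\<lambda>g. case g of Ga \<Rightarrow> xa | Gb \<Rightarrow> yb | Gt \<Rightarrow> ta) in
        wpar h (\<phi> Ga) = xa \<and> wpar h (\<phi> Gb) = yb}"

definition b1 :: "(gen \<Rightarrow> word) \<Rightarrow> nat" where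
  "b1 \<phi> = (THE n. card (hom_Z2 \<phi>) = 2 ^ n)"

type_synonym mat2 = "complex^2^2"

fun eval :: "(gen \<Rightarrow> mat2) \<Rightarrow> word \<Rightarrow> mat2" where
  "eval f [] = mat 1"
| "eval f (x # xs) = (if snd x then matrix_inv (f (fst x)) else f (fst x)) ** eval f xs"

definition SL2 :: "mat2 set" where
  "SL2 = {X. det X = 1}"

definition sl_rep_M :: "(gen \<Rightarrow> word) \<Rightarrow> (gen \<Rightarrow> mat2) \<Rightarrow> bool" where
  "sl_rep_M \<phi> f \<longleftrightarrow> (\<forall>g. f g \<in> SL2) \<and>
     (\<forall>g\<in>{Ga, Gb}. matrix_inv (f Gt) ** f g ** f Gt = eval f (\<phi> g))"

text \<open>Representation pi_1(M_phi) \<rightarrow> PSL(2,C), described by SL(2,C) lifts of the images of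
  the generators; the relations hold in PSL(2,C), i.e. up to sign.\<close>
definition psl_rep_M :: "(gen \<Rightarrow> word) \<Rightarrow> (gen \<Rightarrow> mat2) \<Rightarrow> bool" where
  "psl_rep_M \<phi> f \<longleftrightarrow> (\<forall>g. f g \<in> SL2) \<and>
     (\<forall>g\<in>{Ga, Gb}. matrix_inv (f Gt) ** f g ** f Gt = eval f (\<phi> g) \<or>
                    matrix_inv (f Gt) ** f g ** f Gt = - eval f (\<phi> g))"

text \<open>PSL(2,C)-character: gamma \<mapsto> tr^2 (well defined on PSL(2,C)).\<close>
definition pchar_M :: "(gen \<Rightarrow> mat2) \<Rightarrow> word \<Rightarrow> complex" where
  "pchar_M f = (\<lambda>w. (trace (eval f w))\<^sup>2)"

definition Xbar_M :: "(gen \<Rightarrow> word) \<Rightarrow> (word \<Rightarrow> complex) set" where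
  "Xbar_M \<phi> = {pchar_M f | f. psl_rep_M \<phi> f}"

text \<open>Characters on pi_1(S): only defined on surface words (0 elsewhere by convention).\<close>
definition restrS :: "(word \<Rightarrow> complex) \<Rightarrow> word \<Rightarrow> complex" where
  "restrS c = (\<lambda>w. if surface_word w then c w else 0)"

definition surf_assign :: "mat2 \<Rightarrow> mat2 \<Rightarrow> gen \<Rightarrow> mat2" where
  "surf_assign A B = (\<lambda>g. case g of Ga \<Rightarrow> A | Gb \<Rightarrow> B | Gt \<Rightarrow> mat 1)"

text \<open>Character of the PSL(2,C)-representation of pi_1(S) given by a \<mapsto> \<pm>A, b \<mapsto> \<pm>B.\<close>
definition pchar_S :: "mat2 \<Rightarrow> mat2 \<Rightarrow> word \<Rightarrow> complex" where
  "pchar_S A B = restrS (pchar_M (surf_assign A B))"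

definition rbar :: "(word \<Rightarrow> complex) \<Rightarrow> word \<Rightarrow> complex" where
  "rbar c = restrS c"

definition fibre :: "(gen \<Rightarrow> word) \<Rightarrow> (word \<Rightarrow> complex) \<Rightarrow> (word \<Rightarrow> complex) set" where
  "fibre \<phi> c0 = {c \<in> Xbar_M \<phi>. rbar c = c0}"

definition lifts :: "(gen \<Rightarrow> word) \<Rightarrow> (word \<Rightarrow> complex) \<Rightarrow> bool" where
  "lifts \<phi> c \<longleftrightarrow> (\<exists>f. sl_rep_M \<phi> f \<and> pchar_M f = c)"

definition irreducible2 :: "mat2 \<Rightarrow> mat2 \<Rightarrow> bool" where
  "irreducible2 A B \<longleftrightarrow> \<not> (\<exists>v::complex^2. v \<noteq> 0 \<and> (\<exists>l m. A *v v = l *s v \<and> B *v v = m *s v))"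

text \<open>PSL(2,C) elements as classes {X, -X}; centraliser of the image of rhobar in PSL(2,C).\<close>
definition psl_class :: "mat2 \<Rightarrow> mat2 set" where
  "psl_class X = {X, - X}"

definition centraliser_img :: "mat2 \<Rightarrow> mat2 \<Rightarrow> mat2 set set" where
  "centraliser_img A B = {psl_class X | X. X \<in> SL2 \<and>
     (\<forall>w. surface_word w \<longrightarrow>
        X ** eval (surf_assign A B) w = eval (surf_assign A B) w ** X \<or>
        X ** eval (surf_assign A B) w = - (eval (surf_assign A B) w ** X))}"

end

theory Submission
  imports Defs
begin

(* Let rho be a PSL(2,C)-representation of pi_1(M_phi) in the fibre. Since an irreducible
   pair in SL(2,C) is determined up to conjugacy by the traces of a, b and ab, and the squared
   traces of a, b, ab, a^2 b fix these up to sign changes of the generators, rho can be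
   normalised to a -> A, b -> B, t -> T. The relations t^-1 g t = +-phi(g) then determine T up
   to the centraliser {1, C} of A, B in PSL(2,C), so the fibre consists of the characters of
   T0 and C T0, and a computation in a basis diagonalising C shows that they differ.

   As C has order two, C^2 = -1 and C commutes or anticommutes with each of A, B; this defines
   a nonzero class sigma in H^1(S; Z/2) fixed by phi^*. A character lifts to SL(2,C) iff the
   signs with which its relations hold lie in the image of 1 + phi^*, and the signs of T0 and
   C T0 differ by sigma. As phi^* is invertible with fixed vector sigma, either phi^* = 1,
   so b_1 = 3 and at most one of the two characters lifts, or phi^* is the transvection along
   sigma, so b_1 = 2 and the image of 1 + phi^* is spanned by sigma: both characters lift or
   neither does. *)

section \<open>Two-by-two complex matrices\<close>

lemma mat2_eq_iff:
  "(X::mat2) = Y \<longleftrightarrow> X$1$1 = Y$1$1 \<and> X$1$2 = Y$1$2 \<and> X$2$1 = Y$2$1 \<and> X$2$2 = Y$2$2"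
  by (auto simp: vec_eq_iff forall_2)

lemma vec2_eq_iff: "(x::complex^2) = y \<longleftrightarrow> x$1 = y$1 \<and> x$2 = y$2"
  by (auto simp: vec_eq_iff forall_2)

lemma mat2_mult_entries:
  fixes X Y :: mat2
  shows "(X ** Y)$1$1 = X$1$1 * Y$1$1 + X$1$2 * Y$2$1"
    and "(X ** Y)$1$2 = X$1$1 * Y$1$2 + X$1$2 * Y$2$2"
    and "(X ** Y)$2$1 = X$2$1 * Y$1$1 + X$2$2 * Y$2$1"
    and "(X ** Y)$2$2 = X$2$1 * Y$1$2 + X$2$2 * Y$2$2"
  by (simp_all add: matrix_matrix_mult_def sum_2)

lemma mat2_mult_vec_entries:
  fixes X :: mat2 and v :: "complex^2"
  shows "(X *v v)$1 = X$1$1 * v$1 + X$1$2 * v$2"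
    and "(X *v v)$2 = X$2$1 * v$1 + X$2$2 * v$2"
  by (simp_all add: matrix_vector_mult_def sum_2)

lemma mat2_scalar_entries:
  "(mat c::mat2)$1$1 = c" "(mat c::mat2)$1$2 = 0" "(mat c::mat2)$2$1 = 0" "(mat c::mat2)$2$2 = c"
  by (simp_all add: mat_def)

lemma trace_mat2: "trace (X::mat2) = X$1$1 + X$2$2"
  by (simp add: trace_def sum_2)

definition adj2 :: "mat2 \<Rightarrow> mat2" where
  "adj2 X = (\<chi> i j. if i = 1 \<and> j = 1 then X$2$2 else if i = 1 \<and> j = 2 then - X$1$2
     else if i = 2 \<and> j = 1 then - X$2$1 else X$1$1)"

lemma adj2_entries:
  "(adj2 X)$1$1 = X$2$2" "(adj2 X)$1$2 = - X$1$2" "(adj2 X)$2$1 = - X$2$1" "(adj2 X)$2$2 = X$1$1"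
  by (simp_all add: adj2_def)

definition matrix2 :: "complex \<Rightarrow> complex \<Rightarrow> complex \<Rightarrow> complex \<Rightarrow> mat2" where
  "matrix2 a b c d = (\<chi> i j. if i = 1 \<and> j = 1 then a else if i = 1 \<and> j = 2 then b
     else if i = 2 \<and> j = 1 then c else d)"

lemma matrix2_entries:
  "(matrix2 a b c d)$1$1 = a" "(matrix2 a b c d)$1$2 = b"
  "(matrix2 a b c d)$2$1 = c" "(matrix2 a b c d)$2$2 = d"
  by (simp_all add: matrix2_def)

definition columns2 :: "complex^2 \<Rightarrow> complex^2 \<Rightarrow> mat2" where
  "columns2 v w = (\<chi> i j. if j = 1 then v$i else w$i)"

lemma columns2_entries:
  "(columns2 v w)$1$1 = v$1" "(columns2 v w)$2$1 = v$2"
  "(columns2 v w)$1$2 = w$1" "(columns2 v w)$2$2 = w$2"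
  by (simp_all add: columns2_def)

lemmas mat2_simps = mat2_eq_iff vec2_eq_iff mat2_mult_entries mat2_mult_vec_entries
  mat2_scalar_entries det_2 trace_mat2 adj2_entries matrix2_entries columns2_entries
  vector_scalar_mult_def

lemma mult_adj2_right: "(X::mat2) ** adj2 X = mat (det X)"
  by (simp add: mat2_simps algebra_simps)

lemma mult_adj2_left: "adj2 (X::mat2) ** X = mat (det X)"
  by (simp add: mat2_simps algebra_simps)

lemma matrix_inv_eq_adj2:
  assumes "det X = 1"
  shows "matrix_inv X = adj2 X"
proof -
  have inverse: "X ** adj2 X = mat 1 \<and> adj2 X ** X = mat 1"
    using assms by (simp add: mult_adj2_right mult_adj2_left)
  then have "X ** matrix_inv X = mat 1 \<and> matrix_inv X ** X = mat 1"
    unfolding matrix_inv_def by (rule someI)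
  then have "matrix_inv X = (adj2 X ** X) ** matrix_inv X"
    using inverse by simp
  also have "\<dots> = adj2 X"
    using \<open>X ** matrix_inv X = mat 1 \<and> _\<close> by (simp flip: matrix_mul_assoc)
  finally show ?thesis .
qed

lemma det_adj2 [simp]: "det (adj2 X) = det X"
  by (simp add: mat2_simps algebra_simps)

lemma adj2_uminus [simp]: "adj2 (- X) = - adj2 X"
  by (simp add: mat2_simps)

lemma adj2_adj2 [simp]: "adj2 (adj2 X) = X"
  by (simp add: mat2_simps)

lemma adj2_mult: "adj2 ((X::mat2) ** Y) = adj2 Y ** adj2 X"
  by (simp add: mat2_simps algebra_simps)

lemma adj2_mat1 [simp]: "adj2 (mat 1) = mat 1"
  by (simp add: mat2_simps)

lemma det_uminus2 [simp]: "det (- X :: mat2) = det X"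
  by (simp add: mat2_simps algebra_simps)

lemma trace_uminus2 [simp]: "trace (- X :: mat2) = - trace X"
  by (simp add: mat2_simps)

lemma matrix_mult_uminus_left2 [simp]: "(- (X::mat2)) ** (Y::mat2) = - (X ** Y)"
  by (simp add: mat2_simps)

lemma matrix_mult_uminus_right2 [simp]: "(X::mat2) ** (- (Y::mat2)) = - (X ** Y)"
  by (simp add: mat2_simps)

lemma uminus_neq_self2: "det (X::mat2) \<noteq> 0 \<Longrightarrow> - X \<noteq> X"
  by (auto simp: mat2_simps)

lemma mat_commute2: "mat c ** (X::mat2) = X ** mat c"
  by (simp add: mat2_simps algebra_simps)

lemma det_mat2: "det (mat c :: mat2) = c\<^sup>2"
  by (simp add: mat2_simps power2_eq_square)

context
  fixes P :: mat2
  assumes det_P: "det P = 1"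
begin

lemma SL2_mult_adj2 [simp]: "P ** adj2 P = mat 1" "adj2 P ** P = mat 1"
  using det_P by (simp_all add: mult_adj2_right mult_adj2_left)

lemma SL2_adj2_cancel [simp]: "adj2 P ** (P ** X) = X" "P ** (adj2 P ** X) = X"
  "X ** P ** adj2 P = X" "X ** adj2 P ** P = X"
  by (simp_all add: matrix_mul_assoc flip: matrix_mul_assoc[of X])

end

lemma cayley_hamilton2: "det (X::mat2) = 1 \<Longrightarrow> X ** X = mat (trace X) ** X - mat 1"
  by (simp add: mat2_simps algebra_simps)

lemma trace_square_mult2:
  "det (X::mat2) = 1 \<Longrightarrow> trace (X ** X ** Y) = trace X * trace (X ** Y) - trace Y"
  by (simp add: mat2_simps) algebra

definition conj2 :: "mat2 \<Rightarrow> mat2 \<Rightarrow> mat2" where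
  "conj2 P X = adj2 P ** X ** P"

context
  fixes P :: mat2
  assumes det_P: "det P = 1"
begin

lemma conj2_mult: "conj2 P (X ** Y) = conj2 P X ** conj2 P Y"
proof -
  have "conj2 P X ** conj2 P Y = adj2 P ** X ** (P ** adj2 P) ** Y ** P"
    unfolding conj2_def by (simp add: matrix_mul_assoc)
  then show ?thesis
    using det_P by (simp add: conj2_def matrix_mul_assoc)
qed

lemma conj2_mat1 [simp]: "conj2 P (mat 1) = mat 1"
  using det_P by (simp add: conj2_def)

lemma det_conj2 [simp]: "det (conj2 P X) = det X"
  using det_P by (simp add: conj2_def det_mul)

lemma trace_conj2 [simp]: "trace (conj2 P X) = trace X"
proof -
  have "trace (adj2 P ** X ** P) = trace (P ** (adj2 P ** X))"
    by (rule trace_mul_sym)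
  then show ?thesis
    using det_P by (simp add: conj2_def)
qed

lemma conj2_eq_iff: "conj2 P X = Y \<longleftrightarrow> X ** P = P ** Y"
proof
  assume "conj2 P X = Y"
  then show "X ** P = P ** Y"
    using det_P by (auto simp: conj2_def matrix_mul_assoc)
next
  assume "X ** P = P ** Y"
  then have "adj2 P ** (X ** P) = Y"
    using det_P by simp
  then show "conj2 P X = Y"
    by (simp add: conj2_def matrix_mul_assoc)
qed

lemma conj2_inverse: "P ** conj2 P X ** adj2 P = X"
  using det_P by (simp add: conj2_def matrix_mul_assoc)

lemma conj2_inj: "conj2 P X = conj2 P Y \<longleftrightarrow> X = Y"
  by (metis conj2_inverse)

end

lemma conj2_uminus [simp]: "conj2 P (- X) = - conj2 P X"
  by (simp add: conj2_def)

lemma conj2_mat1_left [simp]: "conj2 (mat 1) X = X"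
  by (simp add: conj2_def)

lemma conj2_conj2: "conj2 Q (conj2 P X) = conj2 (P ** Q) X"
  by (simp add: conj2_def adj2_mult matrix_mul_assoc)

lemma quadratic_root_exists: "\<exists>l::complex. l\<^sup>2 - t * l + d = 0"
proof
  show "((t + csqrt (t\<^sup>2 - 4 * d)) / 2)\<^sup>2 - t * ((t + csqrt (t\<^sup>2 - 4 * d)) / 2) + d = 0"
    by (simp add: power2_eq_square field_simps) (simp add: power2_eq_square[symmetric] algebra_simps)
qed

lemma eigenvalue2_root:
  fixes X :: mat2
  assumes "det X = 1" "X *v v = l *s v" "v \<noteq> 0"
  shows "l\<^sup>2 - trace X * l + 1 = 0"
proof -
  have "X$1$1 * v$1 + X$1$2 * v$2 = l * v$1" "X$2$1 * v$1 + X$2$2 * v$2 = l * v$2"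
    "X$1$1 * X$2$2 - X$1$2 * X$2$1 = 1"
    using assms(1,2) by (simp_all add: mat2_simps)
  then have "(l\<^sup>2 - trace X * l + 1) * v$1 = 0" "(l\<^sup>2 - trace X * l + 1) * v$2 = 0"
    by (simp_all add: trace_mat2) algebra+
  moreover have "v$1 \<noteq> 0 \<or> v$2 \<noteq> 0"
    using assms(3) by (auto simp: vec2_eq_iff)
  ultimately show ?thesis by auto
qed

lemma eigenvector2_exists:
  fixes X :: mat2
  assumes "l\<^sup>2 - trace X * l + det X = 0"
  shows "\<exists>v. v \<noteq> 0 \<and> X *v v = l *s v"
proof -
  have char: "l\<^sup>2 - (X$1$1 + X$2$2) * l + (X$1$1 * X$2$2 - X$1$2 * X$2$1) = 0"
    using assms by (simp add: trace_mat2 det_2)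
  consider "X$1$2 \<noteq> 0 \<or> l \<noteq> X$1$1" | "X$2$1 \<noteq> 0 \<or> l \<noteq> X$2$2"
    | "X$1$2 = 0" "X$2$1 = 0" "X$1$1 = l" "X$2$2 = l"
    by fastforce
  then show ?thesis
  proof cases
    case 1
    let ?v = "vector [X$1$2, l - X$1$1] :: complex^2"
    have "X *v ?v = l *s ?v"
      using char by (simp add: mat2_simps power2_eq_square) algebra
    then show ?thesis using 1 by (intro exI[of _ ?v]) (auto simp: vec2_eq_iff)
  next
    case 2
    let ?v = "vector [l - X$2$2, X$2$1] :: complex^2"
    have "X *v ?v = l *s ?v"
      using char by (simp add: mat2_simps power2_eq_square) algebra
    then show ?thesis using 2 by (intro exI[of _ ?v]) (auto simp: vec2_eq_iff)
  next
    case 3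
    let ?v = "vector [1, 0] :: complex^2"
    have "X *v ?v = l *s ?v"
      using 3 by (simp add: mat2_simps)
    then show ?thesis by (intro exI[of _ ?v]) (auto simp: vec2_eq_iff)
  qed
qed

lemma columns2_det_eq_0:
  assumes "v \<noteq> 0" "det (columns2 v w) = 0"
  shows "\<exists>m. w = m *s v"
proof (cases "v$1 = 0")
  case True
  then have "v$2 \<noteq> 0"
    using assms(1) by (auto simp: vec2_eq_iff)
  then show ?thesis
    using assms True by (intro exI[of _ "w$2 / v$2"]) (auto simp: mat2_simps field_simps)
next
  case False
  then show ?thesis
    using assms by (intro exI[of _ "w$1 / v$1"]) (auto simp: mat2_simps field_simps)
qed

lemma nonzero_mat2_kernel_collinear:
  fixes M :: mat2
  assumes "M \<noteq> 0" "M *v v = 0" "M *v u = 0" "v \<noteq> 0"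
  shows "\<exists>m. u = m *s v"
proof -
  have "M$1$1 * v$1 + M$1$2 * v$2 = 0" "M$2$1 * v$1 + M$2$2 * v$2 = 0"
    "M$1$1 * u$1 + M$1$2 * u$2 = 0" "M$2$1 * u$1 + M$2$2 * u$2 = 0"
    using assms(2,3) by (simp_all add: mat2_simps)
  then have "M$1$1 * (v$1 * u$2 - u$1 * v$2) = 0" "M$1$2 * (v$1 * u$2 - u$1 * v$2) = 0"
    "M$2$1 * (v$1 * u$2 - u$1 * v$2) = 0" "M$2$2 * (v$1 * u$2 - u$1 * v$2) = 0"
    by algebra+
  moreover have "M$1$1 \<noteq> 0 \<or> M$1$2 \<noteq> 0 \<or> M$2$1 \<noteq> 0 \<or> M$2$2 \<noteq> 0"
    using assms(1) by (auto simp: mat2_eq_iff)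
  ultimately have "det (columns2 v u) = 0"
    by (auto simp: mat2_simps)
  then show ?thesis
    using columns2_det_eq_0[OF assms(4)] by blast
qed

lemma conj2_of_intertwiner:
  assumes "det Q \<noteq> 0"
  shows "\<exists>P. det P = 1 \<and> (\<forall>X Y. X ** Q = Q ** Y \<longrightarrow> conj2 P X = Y)"
proof -
  define c where "c = 1 / csqrt (det Q)"
  define P where "P = mat c ** Q"
  have "c\<^sup>2 * det Q = 1"
    using assms by (simp add: c_def power_divide)
  then have det_P: "det P = 1"
    by (simp add: P_def det_mul det_mat2)
  have "conj2 P X = Y" if "X ** Q = Q ** Y" for X Y
  proof -
    have "X ** P = (X ** mat c) ** Q"
      by (simp add: P_def matrix_mul_assoc)
    also have "\<dots> = mat c ** (X ** Q)"
      by (simp add: mat_commute2 matrix_mul_assoc)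
    also have "\<dots> = P ** Y"
      using that by (simp add: P_def matrix_mul_assoc)
    finally have "X ** P = P ** Y" .
    then show ?thesis
      using conj2_eq_iff[OF det_P] by simp
  qed
  then show ?thesis
    using det_P by blast
qed

lemma mult_columns2: "(A::mat2) ** columns2 v w = columns2 (A *v v) (A *v w)"
  by (simp add: mat2_simps)

lemma columns2_mult_matrix2:
  "columns2 v w ** matrix2 a b c d = columns2 (a *s v + c *s w) (b *s v + d *s w)"
  by (simp add: mat2_simps algebra_simps)

lemma columns2_eq_iff: "columns2 v w = columns2 v' w' \<longleftrightarrow> v = v' \<and> w = w'"
  by (auto simp: mat2_simps)

lemma cayley_hamilton2_vec: "det (B::mat2) = 1 \<Longrightarrow> B *v (B *v v) = trace B *s (B *v v) - v"
  by (simp add: matrix_vector_mul_assoc cayley_hamilton2) (simp add: mat2_simps algebra_simps)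

section \<open>Evaluation of words\<close>

definition sl_valued :: "(gen \<Rightarrow> mat2) \<Rightarrow> bool" where
  "sl_valued f \<longleftrightarrow> (\<forall>g. det (f g) = 1)"

definition letter_mat :: "(gen \<Rightarrow> mat2) \<Rightarrow> letter \<Rightarrow> mat2" where
  "letter_mat f x = (if snd x then adj2 (f (fst x)) else f (fst x))"

lemma eval_Cons_sl_valued: "sl_valued f \<Longrightarrow> eval f (x # xs) = letter_mat f x ** eval f xs"
  by (simp add: sl_valued_def letter_mat_def matrix_inv_eq_adj2)

lemma eval_append: "eval f (u @ v) = eval f u ** eval f v"
  by (induction u) (simp_all add: matrix_mul_assoc)

lemma det_eval: "sl_valued f \<Longrightarrow> det (eval f w) = 1"
  by (induction w) (simp_all add: eval_Cons_sl_valued letter_mat_def sl_valued_def det_mul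
      del: eval.simps(2))

lemma eval_winv: "sl_valued f \<Longrightarrow> eval f (winv w) = adj2 (eval f w)"
proof (induction w)
  case Nil
  then show ?case by (simp add: winv_def)
next
  case (Cons x xs)
  obtain g e where x: "x = (g, e)" by force
  have "winv (x # xs) = winv xs @ [(g, \<not> e)]"
    by (simp add: winv_def x)
  moreover have "letter_mat f (g, \<not> e) = adj2 (letter_mat f x)"
    by (simp add: letter_mat_def x)
  ultimately show ?case
    using Cons by (simp add: eval_append eval_Cons_sl_valued adj2_mult del: eval.simps(2))
qed

lemma eval_red: "sl_valued f \<Longrightarrow> eval f (red w) = eval f w"
proof (induction w)
  case Nil
  then show ?case by simp
next
  case (Cons x xs)
  show ?case
  proof (cases "red xs")
    case Nil
    then show ?thesis using Cons by (simp add: eval_Cons_sl_valued del: eval.simps(2))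
  next
    case (Cons y ys)
    have IH: "eval f (y # ys) = eval f xs"
      using Cons.IH Cons.prems Cons by simp
    show ?thesis
    proof (cases "fst y = fst x \<and> snd y \<noteq> snd x")
      case True
      then have "letter_mat f x ** letter_mat f y = mat 1"
        using Cons.prems by (cases "snd x") (auto simp: letter_mat_def sl_valued_def)
      have "eval f (x # xs) = letter_mat f x ** (letter_mat f y ** eval f ys)"
        using IH Cons.prems by (simp add: eval_Cons_sl_valued del: eval.simps(2))
      also have "\<dots> = eval f ys"
        using \<open>letter_mat f x ** letter_mat f y = mat 1\<close> by (simp add: matrix_mul_assoc)
      finally have "eval f (x # xs) = eval f ys" .
      then show ?thesis using True Cons by simp
    next
      case False
      then show ?thesis
        using Cons IH Cons.prems by (auto simp: eval_Cons_sl_valued simp del: eval.simps(2))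
    qed
  qed
qed

lemma sl_valued_eval: "sl_valued f \<Longrightarrow> sl_valued (\<lambda>g. eval f (\<phi> g))"
  by (simp add: sl_valued_def det_eval)

lemma eval_wsubst: "sl_valued f \<Longrightarrow> eval f (wsubst \<phi> w) = eval (\<lambda>g. eval f (\<phi> g)) w"
proof (induction w)
  case Nil
  then show ?case by (simp add: wsubst_def)
next
  case (Cons x xs)
  have "wsubst \<phi> (x # xs) = (if snd x then winv (\<phi> (fst x)) else \<phi> (fst x)) @ wsubst \<phi> xs"
    by (simp add: wsubst_def split: prod.split)
  moreover have "eval f (if snd x then winv (\<phi> (fst x)) else \<phi> (fst x))
      = letter_mat (\<lambda>g. eval f (\<phi> g)) x"
    using Cons.prems by (simp add: letter_mat_def eval_winv)
  ultimately show ?case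
    using Cons by (simp add: eval_append eval_Cons_sl_valued sl_valued_eval del: eval.simps(2))
qed

lemma eval_cong: "(\<And>g. g \<in> letters w \<Longrightarrow> f g = f' g) \<Longrightarrow> eval f w = eval f' w"
  by (induction w) (auto simp: letters_def)

lemma letters_surface_word: "surface_word w \<Longrightarrow> g \<in> letters w \<Longrightarrow> g \<in> {Ga, Gb}"
  unfolding surface_word_def by auto

lemma surface_word_singleton: "g \<in> {Ga, Gb} \<Longrightarrow> surface_word [(g, False)]"
  by (auto simp: surface_word_def letters_def)

definition sign_twist :: "(gen \<Rightarrow> bool) \<Rightarrow> (gen \<Rightarrow> mat2) \<Rightarrow> gen \<Rightarrow> mat2" where
  "sign_twist h f = (\<lambda>g. if h g then - f g else f g)"

lemma sign_twist_apply: "sign_twist h f g = (if h g then - f g else f g)"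
  by (simp add: sign_twist_def)

lemma sl_valued_sign_twist: "sl_valued f \<Longrightarrow> sl_valued (sign_twist h f)"
  by (simp add: sl_valued_def sign_twist_def)

lemma eval_sign_twist:
  "sl_valued f \<Longrightarrow> eval (sign_twist h f) w = (if wpar h w then - eval f w else eval f w)"
proof (induction w)
  case Nil
  then show ?case by (simp add: wpar_def)
next
  case (Cons x xs)
  have "letter_mat (sign_twist h f) x = (if h (fst x) then - letter_mat f x else letter_mat f x)"
    by (simp add: letter_mat_def sign_twist_def)
  then show ?case
    using Cons by (simp add: eval_Cons_sl_valued sl_valued_sign_twist wpar_def del: eval.simps(2))
qed

definition conj_assign :: "mat2 \<Rightarrow> (gen \<Rightarrow> mat2) \<Rightarrow> gen \<Rightarrow> mat2" where
  "conj_assign P f = (\<lambda>g. conj2 P (f g))"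

lemma conj_assign_apply: "conj_assign P f g = conj2 P (f g)"
  by (simp add: conj_assign_def)

lemma sl_valued_conj_assign: "sl_valued f \<Longrightarrow> det P = 1 \<Longrightarrow> sl_valued (conj_assign P f)"
  by (simp add: sl_valued_def conj_assign_def)

lemma eval_conj_assign:
  assumes "sl_valued f" "det P = 1"
  shows "eval (conj_assign P f) w = conj2 P (eval f w)"
proof (induction w)
  case Nil
  then show ?case using assms(2) by simp
next
  case (Cons x xs)
  have "letter_mat (conj_assign P f) x = conj2 P (letter_mat f x)"
    by (simp add: letter_mat_def conj_assign_def conj2_def adj2_mult matrix_mul_assoc)
  then show ?case
    using Cons assms
    by (simp add: eval_Cons_sl_valued sl_valued_conj_assign conj2_mult del: eval.simps(2))
qed

section \<open>Commuting in PSL(2,C)\<close>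

definition pcommute :: "mat2 \<Rightarrow> mat2 \<Rightarrow> bool" where
  "pcommute K X \<longleftrightarrow> K ** X = X ** K \<or> K ** X = - (X ** K)"

lemma pcommute_refl: "pcommute X X"
  by (simp add: pcommute_def)

lemma pcommute_sym: "pcommute K X \<longleftrightarrow> pcommute X K"
  unfolding pcommute_def by (metis minus_minus)

lemma pcommute_mult: "pcommute K X \<Longrightarrow> pcommute K Y \<Longrightarrow> pcommute K (X ** Y)"
proof -
  have assoc: "K ** (X ** Y) = (K ** X) ** Y" "X ** (K ** Y) = (X ** K) ** Y"
    "X ** (Y ** K) = (X ** Y) ** K"
    by (simp_all add: matrix_mul_assoc)
  show "pcommute K X \<Longrightarrow> pcommute K Y \<Longrightarrow> pcommute K (X ** Y)"
    unfolding pcommute_def by (elim disjE) (simp_all add: assoc, simp_all add: assoc[symmetric])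
qed

lemma pcommute_iff_conj2:
  "det K = 1 \<Longrightarrow> pcommute K X \<longleftrightarrow> conj2 K X = X \<or> conj2 K X = - X"
  by (auto simp: pcommute_def conj2_eq_iff)

lemma conj2_pcommute_sign:
  "det K = 1 \<Longrightarrow> pcommute K X \<Longrightarrow> conj2 K X = (if K ** X = X ** K then X else - X)"
  by (auto simp: pcommute_def conj2_eq_iff)

lemma pcommute_adj2:
  assumes det_X: "det X = 1" and "pcommute K X"
  shows "pcommute K (adj2 X)"
proof -
  have "adj2 X ** K = adj2 X ** (K ** X) ** adj2 X"
    using det_X by (simp flip: matrix_mul_assoc)
  from \<open>pcommute K X\<close> consider "K ** X = X ** K" | "K ** X = - (X ** K)"
    unfolding pcommute_def by blast
  then show ?thesis
  proof cases
    case 1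
    then have "adj2 X ** K = K ** adj2 X"
      using det_X \<open>adj2 X ** K = _\<close> by (simp add: matrix_mul_assoc)
    then show ?thesis by (simp add: pcommute_def)
  next
    case 2
    then have "adj2 X ** K = - (K ** adj2 X)"
      using det_X \<open>adj2 X ** K = _\<close> by (simp add: matrix_mul_assoc)
    then show ?thesis by (simp add: pcommute_def)
  qed
qed

lemma pcommute_eval:
  "sl_valued f \<Longrightarrow> (\<And>g. g \<in> letters w \<Longrightarrow> pcommute K (f g)) \<Longrightarrow> pcommute K (eval f w)"
proof (induction w)
  case Nil
  then show ?case by (simp add: pcommute_def)
next
  case (Cons x xs)
  have "pcommute K (letter_mat f x)"
    using Cons.prems by (auto simp: letter_mat_def letters_def sl_valued_def intro: pcommute_adj2)
  moreover have "pcommute K (eval f xs)"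
    using Cons by (auto simp: letters_def)
  ultimately show ?case
    using Cons.prems by (simp add: eval_Cons_sl_valued pcommute_mult del: eval.simps(2))
qed

lemma conj2_pcommute_iff:
  assumes "det P = 1"
  shows "pcommute (conj2 P K) (conj2 P X) \<longleftrightarrow> pcommute K X"
proof -
  have "conj2 P K ** conj2 P X = conj2 P (K ** X)" "conj2 P X ** conj2 P K = conj2 P (X ** K)"
    using assms by (simp_all add: conj2_mult)
  then show ?thesis
    unfolding pcommute_def using assms by (metis conj2_inj conj2_uminus)
qed

section \<open>Irreducible pairs\<close>

lemma eigenvector_mult_image:
  fixes A B :: mat2
  assumes det_A: "det A = 1" and eigen: "A *v v = l *s v" and root: "l\<^sup>2 - trace A * l + 1 = 0"
  shows "A *v (B *v v) = (trace (A ** B) - trace B / l) *s v + (1 / l) *s (B *v v)"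
proof -
  have "l \<noteq> 0"
    using root by auto
  then have trace_A: "trace A = l + 1 / l"
    using root by (simp add: field_simps power2_eq_square)
  have "(A ** B + B ** A) *v v
      = (mat (trace A) ** B + mat (trace B) ** A + mat (trace (A ** B) - trace A * trace B)) *v v"
    by (simp add: mat2_simps algebra_simps)
  then have "A *v (B *v v) + l *s (B *v v)
      = trace A *s (B *v v) + (l * trace B) *s v + (trace (A ** B) - trace A * trace B) *s v"
    using eigen by (simp add: matrix_vector_mult_add_rdistrib vector_scalar_commute
        flip: matrix_vector_mul_assoc) (simp add: mat2_simps algebra_simps)
  then show ?thesis
    using \<open>l \<noteq> 0\<close> unfolding trace_A by (simp add: mat2_simps field_simps)
qed

lemma irreducible2_normal_form:
  fixes A B :: mat2
  assumes irr: "irreducible2 A B" and det_A: "det A = 1" and det_B: "det B = 1"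
    and eigen: "A *v v = l *s v" "v \<noteq> 0"
  shows "\<exists>P. det P = 1 \<and> conj2 P A = matrix2 l (trace (A ** B) - trace B / l) 0 (1 / l)
    \<and> conj2 P B = matrix2 0 (-1) 1 (trace B)"
proof -
  define Q where "Q = columns2 v (B *v v)"
  have root: "l\<^sup>2 - trace A * l + 1 = 0"
    using eigenvalue2_root[OF det_A eigen] .
  have "det Q \<noteq> 0"
  proof
    assume "det Q = 0"
    then obtain m where "B *v v = m *s v"
      using columns2_det_eq_0[OF eigen(2)] unfolding Q_def by blast
    then show False
      using irr eigen unfolding irreducible2_def by blast
  qed
  moreover have "A ** Q = Q ** matrix2 l (trace (A ** B) - trace B / l) 0 (1 / l)"
    unfolding Q_def mult_columns2 columns2_mult_matrix2 columns2_eq_iff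
    using eigenvector_mult_image[OF det_A eigen(1) root] eigen(1) by simp
  moreover have "B ** Q = Q ** matrix2 0 (-1) 1 (trace B)"
    unfolding Q_def mult_columns2 columns2_mult_matrix2 columns2_eq_iff
    using cayley_hamilton2_vec[OF det_B] by (simp add: algebra_simps)
  ultimately show ?thesis
    using conj2_of_intertwiner by blast
qed

text \<open>These are the trace relations of a pair with a common eigenvector of eigenvalues
  \<open>l\<close>, \<open>m\<close>. For an \<open>l\<close>-eigenvector \<open>v\<close> of \<open>A\<close>, either \<open>v\<close> or \<open>v - B v / m\<close> is a common
  eigenvector.\<close>
lemma not_irreducible2_of_eigenvalues:
  fixes A B :: mat2
  assumes det: "det A = 1" "det B = 1"
    and root_l: "l\<^sup>2 - trace A * l + 1 = 0" and root_m: "m\<^sup>2 - trace B * m + 1 = 0"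
    and root_lm: "(l * m)\<^sup>2 - trace (A ** B) * (l * m) + 1 = 0"
  shows "\<not> irreducible2 A B"
proof
  assume irr: "irreducible2 A B"
  have "l \<noteq> 0" "m \<noteq> 0"
    using root_l root_m by auto
  define k n where "k = 1 / l" and "n = 1 / m"
  have "k * l = 1" "n * m = 1"
    using \<open>l \<noteq> 0\<close> \<open>m \<noteq> 0\<close> by (simp_all add: k_def n_def)
  have root_n: "n\<^sup>2 - trace B * n + 1 = 0"
    using root_m \<open>n * m = 1\<close> by algebra
  have root_kn: "(k * n)\<^sup>2 - trace (A ** B) * (k * n) + 1 = 0"
    using root_lm \<open>k * l = 1\<close> \<open>n * m = 1\<close> by algebra
  obtain v where "v \<noteq> 0" and eigen: "A *v v = l *s v"
    using eigenvector2_exists[of l A] root_l det by auto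
  define u where "u = v - n *s (B *v v)"
  have "B *v u = n *s u"
  proof -
    have "B *v u = B *v v - n *s (trace B *s (B *v v) - v)"
      by (simp add: u_def matrix_vector_mult_diff_distrib vector_scalar_commute
          cayley_hamilton2_vec[OF det(2)])
    also have "\<dots> = n *s u"
      unfolding u_def vec2_eq_iff using root_n
      by (simp add: vector_scalar_mult_def) (intro conjI; algebra)
    finally show ?thesis .
  qed
  moreover have "A *v u = k *s u"
  proof -
    have "A *v u = l *s v - n *s ((trace (A ** B) - trace B * k) *s v + k *s (B *v v))"
      using eigenvector_mult_image[OF det(1) eigen root_l, of B] eigen
      by (simp add: u_def matrix_vector_mult_diff_distrib vector_scalar_commute k_def
          divide_inverse)
    also have "\<dots> = k *s u"
      unfolding u_def vec2_eq_iff using root_n root_kn \<open>k * l = 1\<close>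
      by (simp add: vector_scalar_mult_def) (intro conjI; algebra)
    finally show ?thesis .
  qed
  moreover have "B *v v = m *s v" if "u = 0"
    using that \<open>n * m = 1\<close> unfolding u_def by (simp add: vec2_eq_iff vector_scalar_mult_def)
      (metis mult.commute)
  ultimately show False
    using irr eigen \<open>v \<noteq> 0\<close> unfolding irreducible2_def by blast
qed

lemma irreducible2_traces:
  fixes A B A' B' :: mat2
  assumes irr: "irreducible2 A B" and det: "det A = 1" "det B = 1" "det A' = 1" "det B' = 1"
    and traces: "trace A' = trace A" "trace B' = trace B" "trace (A' ** B') = trace (A ** B)"
  shows "irreducible2 A' B'"
  unfolding irreducible2_def
proof clarify
  fix v' l m
  assume "v' \<noteq> 0" and eigen': "A' *v v' = l *s v'" "B' *v v' = m *s v'"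
  have "l\<^sup>2 - trace A * l + 1 = 0"
    using eigenvalue2_root[OF det(3) eigen'(1) \<open>v' \<noteq> 0\<close>] traces by simp
  moreover have "m\<^sup>2 - trace B * m + 1 = 0"
    using eigenvalue2_root[OF det(4) eigen'(2) \<open>v' \<noteq> 0\<close>] traces by simp
  moreover have "(A' ** B') *v v' = (l * m) *s v'"
    using eigen' by (simp add: vector_scalar_commute flip: matrix_vector_mul_assoc)
  then have "(l * m)\<^sup>2 - trace (A ** B) * (l * m) + 1 = 0"
    using eigenvalue2_root[of "A' ** B'", OF _ _ \<open>v' \<noteq> 0\<close>] det traces by (simp add: det_mul)
  ultimately show False
    using not_irreducible2_of_eigenvalues[OF det(1,2)] irr by blast
qed

lemma irreducible2_conj_by_traces:
  fixes A B A' B' :: mat2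
  assumes irr: "irreducible2 A B" and det: "det A = 1" "det B = 1" "det A' = 1" "det B' = 1"
    and traces: "trace A' = trace A" "trace B' = trace B" "trace (A' ** B') = trace (A ** B)"
  shows "\<exists>P. det P = 1 \<and> conj2 P A' = A \<and> conj2 P B' = B"
proof -
  obtain l where root: "l\<^sup>2 - trace A * l + 1 = 0"
    using quadratic_root_exists by blast
  obtain v v' where "v \<noteq> 0" "A *v v = l *s v" "v' \<noteq> 0" "A' *v v' = l *s v'"
    using eigenvector2_exists[of l A] eigenvector2_exists[of l A'] root det traces by metis
  then obtain P P' where P: "det P = 1" "conj2 P A = conj2 P' A'" "conj2 P B = conj2 P' B'"
    and P': "det P' = 1"
    using irreducible2_normal_form[OF irr det(1,2)]
      irreducible2_normal_form[OF irreducible2_traces[OF assms] det(3,4)] traces by metis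
  have "conj2 (P' ** adj2 P) X' = X" if "conj2 P X = conj2 P' X'" for X X'
  proof -
    have "conj2 (P' ** adj2 P) X' = conj2 (adj2 P) (conj2 P X)"
      using that by (simp add: conj2_conj2)
    also have "\<dots> = X"
      using P(1) by (simp add: conj2_conj2)
    finally show ?thesis .
  qed
  moreover have "det (P' ** adj2 P) = 1"
    using P(1) P' by (simp add: det_mul)
  ultimately show ?thesis
    using P by blast
qed

lemma irreducible2_commutant:
  fixes A B K :: mat2
  assumes irr: "irreducible2 A B" and commute: "K ** A = A ** K" "K ** B = B ** K"
  shows "\<exists>c. K = mat c"
proof -
  obtain l where "l\<^sup>2 - trace K * l + det K = 0"
    using quadratic_root_exists by blast
  then obtain v where "v \<noteq> 0" "K *v v = l *s v"
    using eigenvector2_exists by blast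
  define M where "M = K - mat l"
  have Mv: "M *v v = 0"
    using \<open>K *v v = l *s v\<close> by (simp add: M_def mat2_simps algebra_simps)
  have kernel: "M *v (X *v v) = 0" if "K ** X = X ** K" for X
  proof -
    have "M ** X = K ** X - mat l ** X" "X ** M = X ** K - X ** mat l"
      by (simp_all add: M_def mat2_simps algebra_simps)
    then have "M ** X = X ** M"
      using that by (simp add: mat_commute2)
    then show ?thesis
      using Mv by (metis matrix_vector_mul_assoc matrix_vector_mult_0_right)
  qed
  have "M = 0"
  proof (rule ccontr)
    assume "M \<noteq> 0"
    then have "\<exists>a. A *v v = a *s v" "\<exists>b. B *v v = b *s v"
      using nonzero_mat2_kernel_collinear[OF _ Mv kernel \<open>v \<noteq> 0\<close>] commute by blast+
    then show False
      using irr \<open>v \<noteq> 0\<close> unfolding irreducible2_def by blast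
  qed
  then show ?thesis
    unfolding M_def by auto
qed

lemma irreducible2_not_commute:
  assumes "irreducible2 A B" "det C = 1" "C \<noteq> mat 1" "C \<noteq> - mat 1"
  shows "C ** A \<noteq> A ** C \<or> C ** B \<noteq> B ** C"
proof (rule ccontr)
  assume "\<not> ?thesis"
  then obtain c where "C = mat c"
    using irreducible2_commutant[OF assms(1)] by blast
  then have "c\<^sup>2 = 1"
    using assms(2) by (simp add: det_mat2)
  then show False
    using \<open>C = mat c\<close> assms(3,4) by (auto simp: power2_eq_1_iff mat2_simps)
qed

section \<open>PSL(2,C)-representations of the bundle group\<close>

definition assign :: "mat2 \<Rightarrow> mat2 \<Rightarrow> mat2 \<Rightarrow> gen \<Rightarrow> mat2" where
  "assign A B T = (\<lambda>g. case g of Ga \<Rightarrow> A | Gb \<Rightarrow> B | Gt \<Rightarrow> T)"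

lemma assign_simps [simp]: "assign A B T Ga = A" "assign A B T Gb = B" "assign A B T Gt = T"
  by (simp_all add: assign_def)

lemma sl_valued_assign: "det A = 1 \<Longrightarrow> det B = 1 \<Longrightarrow> det T = 1 \<Longrightarrow> sl_valued (assign A B T)"
  unfolding sl_valued_def by (metis assign_simps gen.exhaust)

lemma sl_valued_surf_assign: "det A = 1 \<Longrightarrow> det B = 1 \<Longrightarrow> sl_valued (surf_assign A B)"
  unfolding sl_valued_def surf_assign_def by (auto split: gen.split)

lemma eval_assign_surface_word:
  "surface_word w \<Longrightarrow> eval (assign A B T) w = eval (surf_assign A B) w"
  by (rule eval_cong) (auto dest: letters_surface_word simp: surf_assign_def)

text \<open>A representation in PSL(2,C) satisfies each defining relation \<open>t\<^sup>-\<^sup>1 g t = \<phi>(g)\<close> of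
  the bundle group only up to a sign of its SL(2,C) lifts; \<open>relator_sign\<close> records that sign.\<close>
definition relator_sign :: "(gen \<Rightarrow> word) \<Rightarrow> (gen \<Rightarrow> mat2) \<Rightarrow> gen \<Rightarrow> bool" where
  "relator_sign \<phi> f g \<longleftrightarrow> conj2 (f Gt) (f g) \<noteq> eval f (\<phi> g)"

definition sign_coboundary :: "(gen \<Rightarrow> word) \<Rightarrow> (gen \<Rightarrow> bool) \<Rightarrow> gen \<Rightarrow> bool" where
  "sign_coboundary \<phi> h g \<longleftrightarrow> h g \<noteq> wpar h (\<phi> g)"

lemma psl_rep_M_iff:
  "psl_rep_M \<phi> f \<longleftrightarrow> sl_valued f \<and>
    (\<forall>g\<in>{Ga, Gb}. conj2 (f Gt) (f g) = eval f (\<phi> g) \<or> conj2 (f Gt) (f g) = - eval f (\<phi> g))"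
  unfolding psl_rep_M_def sl_valued_def SL2_def conj2_def by (auto simp: matrix_inv_eq_adj2)

lemma sl_rep_M_iff: "sl_rep_M \<phi> f \<longleftrightarrow> psl_rep_M \<phi> f \<and> (\<forall>g\<in>{Ga, Gb}. \<not> relator_sign \<phi> f g)"
  unfolding sl_rep_M_def psl_rep_M_iff relator_sign_def sl_valued_def SL2_def conj2_def
  by (auto simp: matrix_inv_eq_adj2)

lemma sl_valued_if_psl_rep_M: "psl_rep_M \<phi> f \<Longrightarrow> sl_valued f"
  by (simp add: psl_rep_M_iff)

lemma psl_rep_M_relation:
  "psl_rep_M \<phi> f \<Longrightarrow> g \<in> {Ga, Gb} \<Longrightarrow>
    conj2 (f Gt) (f g) = (if relator_sign \<phi> f g then - eval f (\<phi> g) else eval f (\<phi> g))"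
  unfolding psl_rep_M_iff relator_sign_def by auto

lemma psl_rep_M_of_relation:
  assumes "sl_valued f"
    and "\<And>g. g \<in> {Ga, Gb} \<Longrightarrow>
      conj2 (f Gt) (f g) = (if e g then - eval f (\<phi> g) else eval f (\<phi> g))"
  shows "psl_rep_M \<phi> f \<and> (\<forall>g\<in>{Ga, Gb}. relator_sign \<phi> f g = e g)"
proof -
  have "- eval f (\<phi> g) \<noteq> eval f (\<phi> g)" for g
    using det_eval[OF assms(1)] uminus_neq_self2 by simp
  then show ?thesis
    using assms unfolding psl_rep_M_iff relator_sign_def by (metis (full_types))
qed

lemma psl_rep_M_sign_twist:
  assumes "psl_rep_M \<phi> f"
  shows "psl_rep_M \<phi> (sign_twist h f) \<and>
    (\<forall>g\<in>{Ga, Gb}. relator_sign \<phi> (sign_twist h f) g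
       = (relator_sign \<phi> f g \<noteq> sign_coboundary \<phi> h g))"
proof (rule psl_rep_M_of_relation)
  show "sl_valued (sign_twist h f)"
    using assms by (simp add: sl_valued_if_psl_rep_M sl_valued_sign_twist)
  fix g :: gen
  assume "g \<in> {Ga, Gb}"
  then show "conj2 (sign_twist h f Gt) (sign_twist h f g) =
    (if relator_sign \<phi> f g \<noteq> sign_coboundary \<phi> h g
     then - eval (sign_twist h f) (\<phi> g) else eval (sign_twist h f) (\<phi> g))"
    using psl_rep_M_relation[OF assms]
    by (simp add: sign_twist_apply conj2_def eval_sign_twist[OF sl_valued_if_psl_rep_M[OF assms]]
        sign_coboundary_def)
qed

lemma psl_rep_M_conj_assign:
  assumes "psl_rep_M \<phi> f" "det P = 1"
  shows "psl_rep_M \<phi> (conj_assign P f) \<and>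
    (\<forall>g\<in>{Ga, Gb}. relator_sign \<phi> (conj_assign P f) g = relator_sign \<phi> f g)"
proof (rule psl_rep_M_of_relation)
  have sl: "sl_valued f"
    using assms(1) by (rule sl_valued_if_psl_rep_M)
  then show "sl_valued (conj_assign P f)"
    using assms(2) by (rule sl_valued_conj_assign)
  fix g :: gen
  assume "g \<in> {Ga, Gb}"
  have "conj2 (conj2 P T) (conj2 P X) = conj2 P (conj2 T X)" for T X
    using assms(2) by (simp add: conj2_def adj2_mult matrix_mul_assoc)
  then show "conj2 (conj_assign P f Gt) (conj_assign P f g) =
    (if relator_sign \<phi> f g then - eval (conj_assign P f) (\<phi> g) else eval (conj_assign P f) (\<phi> g))"
    using psl_rep_M_relation[OF assms(1) \<open>g \<in> {Ga, Gb}\<close>]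
    by (simp add: conj_assign_apply eval_conj_assign[OF sl assms(2)])
qed

lemma pchar_M_sign_twist: "sl_valued f \<Longrightarrow> pchar_M (sign_twist h f) = pchar_M f"
  unfolding pchar_M_def by (rule ext) (simp add: eval_sign_twist)

lemma pchar_M_conj_assign: "sl_valued f \<Longrightarrow> det P = 1 \<Longrightarrow> pchar_M (conj_assign P f) = pchar_M f"
  unfolding pchar_M_def by (rule ext) (simp add: eval_conj_assign)

lemma restrS_pchar_M_eq_pchar_S_iff:
  "restrS (pchar_M f) = pchar_S A B \<longleftrightarrow>
    (\<forall>w. surface_word w \<longrightarrow> (trace (eval f w))\<^sup>2 = (trace (eval (surf_assign A B) w))\<^sup>2)"
  unfolding restrS_def pchar_S_def pchar_M_def by (auto simp: fun_eq_iff)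

lemma restrS_pchar_M_assign: "restrS (pchar_M (assign A B T)) = pchar_S A B"
  unfolding restrS_pchar_M_eq_pchar_S_iff by (simp add: eval_assign_surface_word)

lemma trace_sign_choice:
  assumes "(trace (X::mat2))\<^sup>2 = t\<^sup>2"
  shows "\<exists>s. trace (if s then - X else X) = t"
proof -
  have "trace X = t \<or> trace X = - t"
    using assms by (rule power2_eq_iff[THEN iffD1])
  then show ?thesis
  proof
    assume "trace X = t"
    then show ?thesis by (intro exI[of _ False]) simp
  next
    assume "trace X = - t"
    then show ?thesis by (intro exI[of _ True]) simp
  qed
qed

lemma trace_mult_wrong_sign:
  fixes X Y :: mat2
  assumes "det X = 1" "trace (X ** Y) = - z" "z \<noteq> 0"
    and "(trace (X ** X ** Y))\<^sup>2 = (trace X * z - trace Y)\<^sup>2"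
  shows "trace X = 0 \<or> trace Y = 0"
proof -
  have "trace (X ** X ** Y) = - (trace X * z + trace Y)"
    using trace_square_mult2[OF assms(1)] assms(2) by simp
  then have "4 * (trace X * trace Y * z) = 0"
    using assms(4) by algebra
  then show ?thesis
    using assms(3) by simp
qed

text \<open>The squared traces of \<open>a\<close>, \<open>b\<close>, \<open>a b\<close> and \<open>a\<^sup>2 b\<close> determine the traces of \<open>a\<close>, \<open>b\<close>, \<open>a b\<close>
  up to sign changes of \<open>a\<close> and \<open>b\<close>: a wrong sign of \<open>tr (a b)\<close> that survives fixing the
  signs of \<open>tr a\<close> and \<open>tr b\<close> forces \<open>tr a = 0\<close> or \<open>tr b = 0\<close>, and then one more flip helps.\<close>
lemma traces_up_to_sign:
  fixes A B A' B' :: mat2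
  assumes det: "det A = 1" "det A' = 1"
    and sq: "(trace A')\<^sup>2 = (trace A)\<^sup>2" "(trace B')\<^sup>2 = (trace B)\<^sup>2"
      "(trace (A' ** B'))\<^sup>2 = (trace (A ** B))\<^sup>2"
      "(trace (A' ** A' ** B'))\<^sup>2 = (trace (A ** A ** B))\<^sup>2"
  shows "\<exists>sa sb. trace (if sa then - A' else A') = trace A \<and> trace (if sb then - B' else B') = trace B
    \<and> trace ((if sa then - A' else A') ** (if sb then - B' else B')) = trace (A ** B)"
proof -
  obtain sa sb where sa: "trace (if sa then - A' else A') = trace A"
    and sb: "trace (if sb then - B' else B') = trace B"
    using trace_sign_choice sq(1,2) by metis
  define A2 B2 where "A2 = (if sa then - A' else A')" and "B2 = (if sb then - B' else B')"
  have "(trace (A2 ** B2))\<^sup>2 = (trace (A ** B))\<^sup>2"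
    using sq(3) by (simp add: A2_def B2_def)
  then consider "trace (A2 ** B2) = trace (A ** B)"
    | "trace (A2 ** B2) = - trace (A ** B)" "trace (A ** B) \<noteq> 0"
    by (metis power2_eq_iff minus_zero)
  then show ?thesis
  proof cases
    case 1
    then show ?thesis
      using sa sb unfolding A2_def B2_def by blast
  next
    case 2
    have "(trace (A2 ** A2 ** B2))\<^sup>2 = (trace A2 * trace (A ** B) - trace B2)\<^sup>2"
      using sq(4) trace_square_mult2[OF det(1), of B] sa sb by (simp add: A2_def B2_def)
    then have "trace A = 0 \<or> trace B = 0"
      using trace_mult_wrong_sign[of A2 B2] 2 det(2) sa sb by (simp add: A2_def B2_def)
    then show ?thesis
    proof
      assume "trace A = 0"
      then show ?thesis
        using sa sb 2(1) by (intro exI[of _ "\<not> sa"] exI[of _ sb]) (auto simp: A2_def B2_def)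
    next
      assume "trace B = 0"
      then show ?thesis
        using sa sb 2(1) by (intro exI[of _ sa] exI[of _ "\<not> sb"]) (auto simp: A2_def B2_def)
    qed
  qed
qed

lemma sign_twist_traces:
  assumes sl: "sl_valued f" and det_A: "det A = 1" and restr: "restrS (pchar_M f) = pchar_S A B"
  obtains h where "trace (sign_twist h f Ga) = trace A" "trace (sign_twist h f Gb) = trace B"
    "trace (sign_twist h f Ga ** sign_twist h f Gb) = trace (A ** B)"
proof -
  have sq: "(trace (eval f w))\<^sup>2 = (trace (eval (surf_assign A B) w))\<^sup>2" if "surface_word w" for w
    using restr that unfolding restrS_pchar_M_eq_pchar_S_iff by blast
  have "surface_word [(Ga, False)]" "surface_word [(Gb, False)]"
    "surface_word [(Ga, False), (Gb, False)]" "surface_word [(Ga, False), (Ga, False), (Gb, False)]"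
    by (simp_all add: surface_word_def letters_def)
  from sq[OF this(1)] sq[OF this(2)] sq[OF this(3)] sq[OF this(4)]
  obtain sa sb where "trace (if sa then - f Ga else f Ga) = trace A"
    "trace (if sb then - f Gb else f Gb) = trace B"
    "trace ((if sa then - f Ga else f Ga) ** (if sb then - f Gb else f Gb)) = trace (A ** B)"
    using traces_up_to_sign[where A=A and B=B and A'="f Ga" and B'="f Gb"] det_A sl
    by (auto simp: surf_assign_def matrix_mul_assoc sl_valued_def)
  then show ?thesis
    using that[of "\<lambda>g. (g = Ga \<and> sa) \<or> (g = Gb \<and> sb)"] by (simp add: sign_twist_apply)
qed

lemma psl_rep_M_normal_form:
  assumes irr: "irreducible2 A B" and det: "det A = 1" "det B = 1"
    and rep: "psl_rep_M \<phi> f" and restr: "restrS (pchar_M f) = pchar_S A B"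
  obtains T h where "det T = 1" "psl_rep_M \<phi> (assign A B T)" "pchar_M (assign A B T) = pchar_M f"
    "\<forall>g\<in>{Ga, Gb}. relator_sign \<phi> (assign A B T) g = (relator_sign \<phi> f g \<noteq> sign_coboundary \<phi> h g)"
proof -
  have sl: "sl_valued f"
    using rep by (rule sl_valued_if_psl_rep_M)
  obtain h where traces: "trace (sign_twist h f Ga) = trace A" "trace (sign_twist h f Gb) = trace B"
    "trace (sign_twist h f Ga ** sign_twist h f Gb) = trace (A ** B)"
    using sign_twist_traces[OF sl det(1) restr] by blast
  define f' where "f' = sign_twist h f"
  have rep': "psl_rep_M \<phi> f'"
    and signs': "\<forall>g\<in>{Ga, Gb}. relator_sign \<phi> f' g = (relator_sign \<phi> f g \<noteq> sign_coboundary \<phi> h g)"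
    using psl_rep_M_sign_twist[OF rep] unfolding f'_def by blast+
  have det_f': "det (f' g) = 1" for g
    using sl_valued_if_psl_rep_M[OF rep'] by (simp add: sl_valued_def)
  obtain P where P: "det P = 1" "conj2 P (f' Ga) = A" "conj2 P (f' Gb) = B"
    using irreducible2_conj_by_traces[OF irr det det_f'[of Ga] det_f'[of Gb]] traces
    unfolding f'_def by blast
  define T where "T = conj2 P (f' Gt)"
  have assign: "conj_assign P f' = assign A B T"
  proof
    fix g
    show "conj_assign P f' g = assign A B T g"
      by (cases g) (simp_all only: conj_assign_apply P T_def assign_simps)
  qed
  show ?thesis
  proof (rule that)
    show "det T = 1"
      using P(1) det_f' by (simp add: T_def)
    show "psl_rep_M \<phi> (assign A B T)"
      "\<forall>g\<in>{Ga, Gb}. relator_sign \<phi> (assign A B T) g = (relator_sign \<phi> f g \<noteq> sign_coboundary \<phi> h g)"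
      using psl_rep_M_conj_assign[OF rep' P(1)] signs' unfolding assign by auto
    have "pchar_M (assign A B T) = pchar_M f'"
      using pchar_M_conj_assign[OF sl_valued_if_psl_rep_M[OF rep'] P(1)] unfolding assign .
    also have "\<dots> = pchar_M f"
      unfolding f'_def using sl by (rule pchar_M_sign_twist)
    finally show "pchar_M (assign A B T) = pchar_M f" .
  qed
qed

section \<open>Centralisers of order two\<close>

lemma irreducible2_conj2:
  assumes irr: "irreducible2 A B" and det_P: "det P = 1"
  shows "irreducible2 (conj2 P A) (conj2 P B)"
  unfolding irreducible2_def
proof clarify
  fix v l m
  assume "v \<noteq> 0" "conj2 P A *v v = l *s v" "conj2 P B *v v = m *s v"
  moreover have "X *v (P *v v) = P *v (conj2 P X *v v)" for X
    using det_P by (simp add: conj2_def matrix_vector_mul_assoc matrix_mul_assoc)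
  moreover have "P *v v \<noteq> 0"
    using \<open>v \<noteq> 0\<close> det_P by (metis SL2_mult_adj2(2) matrix_vector_mul_assoc matrix_vector_mul_lid
        matrix_vector_mult_0_right)
  ultimately show False
    using irr unfolding irreducible2_def by (metis vector_scalar_commute)
qed

lemma SL2_square_eq_1:
  fixes C :: mat2
  assumes "det C = 1" "C ** C = mat 1"
  shows "C = mat 1 \<or> C = - mat 1"
proof -
  have "mat (trace C) ** C = (mat 2 :: mat2)"
    using cayley_hamilton2[OF assms(1)] assms(2) by (simp add: mat2_simps)
  then have h: "trace C * C$1$2 = 0" "trace C * C$2$1 = 0" "trace C * C$1$1 = 2"
    "trace C * C$2$2 = 2"
    by (simp_all add: mat2_simps)
  then have "trace C \<noteq> 0"
    by auto
  then have "C$1$2 = 0" "C$2$1 = 0" "C$1$1 = C$2$2"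
    using h by (simp_all, metis mult_left_cancel)
  moreover have "C$1$1 * C$2$2 - C$1$2 * C$2$1 = 1"
    using assms(1) by (simp add: det_2)
  ultimately have "C$1$2 = 0" "C$2$1 = 0" "C$1$1 = C$2$2" "C$1$1 * C$1$1 = 1"
    by auto
  then show ?thesis
    by (auto simp: mat2_simps square_eq_1_iff)
qed

definition J0 :: mat2 where
  "J0 = matrix2 \<i> 0 0 (- \<i>)"

lemma J0_entries: "J0$1$1 = \<i>" "J0$1$2 = 0" "J0$2$1 = 0" "J0$2$2 = - \<i>"
  by (simp_all add: J0_def matrix2_entries)

lemma SL2_conj_J0:
  fixes C :: mat2
  assumes det_C: "det C = 1" and square: "C ** C = - mat 1"
  shows "\<exists>P. det P = 1 \<and> conj2 P C = J0"
proof -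
  have "trace C = 0"
  proof (rule ccontr)
    assume "trace C \<noteq> 0"
    moreover have "mat (trace C) ** C = (0::mat2)"
      using cayley_hamilton2[OF det_C] square by (simp add: mat2_simps)
    ultimately show False
      using det_C by (simp add: mat2_simps)
  qed
  then obtain v1 v2 where v1: "v1 \<noteq> 0" "C *v v1 = \<i> *s v1" and v2: "v2 \<noteq> 0" "C *v v2 = (- \<i>) *s v2"
    using eigenvector2_exists[of "\<i>" C] eigenvector2_exists[of "- \<i>" C] det_C by auto
  have "det (columns2 v1 v2) \<noteq> 0"
  proof
    assume "det (columns2 v1 v2) = 0"
    then obtain m where m: "v2 = m *s v1"
      using columns2_det_eq_0[OF v1(1)] by blast
    then have "(- \<i>) *s (m *s v1) = m *s (\<i> *s v1)"
      using v1(2) v2(2) by (simp add: vector_scalar_commute)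
    then have "m = 0"
      using v1(1) by (auto simp: vec2_eq_iff vector_scalar_mult_def)
    then show False
      using v2(1) m by (simp add: vec2_eq_iff vector_scalar_mult_def)
  qed
  moreover have "C ** columns2 v1 v2 = columns2 v1 v2 ** J0"
    unfolding J0_def mult_columns2 columns2_mult_matrix2 columns2_eq_iff using v1 v2 by simp
  ultimately show ?thesis
    using conj2_of_intertwiner by blast
qed

lemma pcommute_J0_iff: "pcommute J0 X \<longleftrightarrow> (X$1$2 = 0 \<and> X$2$1 = 0) \<or> (X$1$1 = 0 \<and> X$2$2 = 0)"
  unfolding pcommute_def by (auto simp: mat2_simps J0_entries)

lemma trace_square_eq_J0_iff:
  "(trace U)\<^sup>2 = (trace (U ** J0))\<^sup>2 \<longleftrightarrow> (U$1$1)\<^sup>2 + (U$2$2)\<^sup>2 = 0"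
proof -
  have "(trace U)\<^sup>2 - (trace (U ** J0))\<^sup>2 = 2 * ((U$1$1)\<^sup>2 + (U$2$2)\<^sup>2)"
    by (simp add: mat2_simps J0_entries power2_eq_square algebra_simps)
  then show ?thesis
    by (metis eq_iff_diff_eq_0 mult_eq_0_iff zero_neq_numeral)
qed

lemma diagonal_antidiagonal_pcommute:
  fixes X Y T :: mat2
  assumes X: "X$1$2 = 0" "X$2$1 = 0" and Y: "Y$1$1 = 0" "Y$2$2 = 0"
    and det: "det X = 1" "det Y = 1" "det T = 1"
    and traces: "\<And>W. W \<in> {mat 1, X, Y, Y ** X} \<Longrightarrow> (trace (T ** W))\<^sup>2 = (trace (T ** W ** J0))\<^sup>2"
  shows "pcommute X Y"
proof -
  have eq: "((T ** W)$1$1)\<^sup>2 + ((T ** W)$2$2)\<^sup>2 = 0" if "W \<in> {mat 1, X, Y, Y ** X}" for W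
    using traces[OF that] by (simp add: trace_square_eq_J0_iff)
  have "X$1$1 * X$2$2 = 1" "Y$1$2 * Y$2$1 = -1"
    using det X Y by (simp_all add: det_2 equation_minus_iff)
  have "T$1$1 \<noteq> 0 \<or> T$1$2 \<noteq> 0"
    using det(3) by (auto simp: det_2)
  moreover have "(T$1$1)\<^sup>2 * ((X$1$1)\<^sup>2 - (X$2$2)\<^sup>2) = 0"
    using eq[of "mat 1"] eq[of X] X \<open>X$1$1 * X$2$2 = 1\<close>
    by (simp add: mat2_simps power2_eq_square) algebra
  moreover have "(T$1$2 * Y$2$1)\<^sup>2 * ((X$1$1)\<^sup>2 - (X$2$2)\<^sup>2) = 0"
    using eq[of Y] eq[of "Y ** X"] X Y by (simp add: mat2_simps power2_eq_square) algebra
  ultimately have "(X$1$1)\<^sup>2 = (X$2$2)\<^sup>2"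
    using \<open>Y$1$2 * Y$2$1 = -1\<close> by auto
  then have "X$1$1 = X$2$2 \<or> X$1$1 = - X$2$2"
    by (simp add: power2_eq_iff)
  then show ?thesis
    unfolding pcommute_def using X Y by (auto simp: mat2_simps algebra_simps)
qed

lemma antidiagonal_pcommute:
  fixes X Y T :: mat2
  assumes X: "X$1$1 = 0" "X$2$2 = 0" and Y: "Y$1$1 = 0" "Y$2$2 = 0"
    and det: "det X = 1" "det Y = 1" "det T = 1"
    and traces: "\<And>W. W \<in> {mat 1, X, Y, X ** Y} \<Longrightarrow> (trace (T ** W))\<^sup>2 = (trace (T ** W ** J0))\<^sup>2"
  shows "pcommute X Y"
proof -
  have eq: "((T ** W)$1$1)\<^sup>2 + ((T ** W)$2$2)\<^sup>2 = 0" if "W \<in> {mat 1, X, Y, X ** Y}" for W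
    using traces[OF that] by (simp add: trace_square_eq_J0_iff)
  define d1 d2 where "d1 = X$1$2 * Y$2$1" and "d2 = X$2$1 * Y$1$2"
  have XY: "X ** Y = matrix2 d1 0 0 d2" and YX: "Y ** X = matrix2 d2 0 0 d1"
    using X Y by (simp_all add: mat2_simps d1_def d2_def mult.commute)
  have "d1 * d2 = 1"
    using det X Y unfolding d1_def d2_def by (simp add: det_2) algebra
  have "T$1$1 \<noteq> 0 \<or> T$1$2 \<noteq> 0"
    using det(3) by (auto simp: det_2)
  moreover have "(T$1$1)\<^sup>2 * (d1\<^sup>2 - d2\<^sup>2) = 0"
    using eq[of "mat 1"] eq[of "X ** Y"] \<open>d1 * d2 = 1\<close> unfolding XY
    by (simp add: mat2_simps power2_eq_square) algebra
  moreover have "(T$1$2)\<^sup>2 * (d1\<^sup>2 - d2\<^sup>2) = 0"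
    using eq[of X] eq[of Y] X Y unfolding d1_def d2_def by (simp add: mat2_simps power2_eq_square) algebra
  ultimately have "d1\<^sup>2 = d2\<^sup>2"
    by auto
  then have "d1 = d2 \<or> d1 = - d2"
    by (simp add: power2_eq_iff)
  then show ?thesis
    unfolding pcommute_def XY YX by (auto simp: mat2_simps)
qed

lemma J0_equal_trace_squares:
  fixes A B T :: mat2
  assumes det: "det A = 1" "det B = 1" "det T = 1" and pcommute: "pcommute J0 A" "pcommute J0 B"
    and traces: "\<And>W. W \<in> {mat 1, A, B, A ** B, B ** A} \<Longrightarrow> (trace (T ** W))\<^sup>2 = (trace (T ** W ** J0))\<^sup>2"
  shows "pcommute A B \<or> \<not> irreducible2 A B"
proof -
  consider "A$1$2 = 0 \<and> A$2$1 = 0" "B$1$2 = 0 \<and> B$2$1 = 0"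
    | "A$1$2 = 0 \<and> A$2$1 = 0" "B$1$1 = 0 \<and> B$2$2 = 0"
    | "A$1$1 = 0 \<and> A$2$2 = 0" "B$1$2 = 0 \<and> B$2$1 = 0"
    | "A$1$1 = 0 \<and> A$2$2 = 0" "B$1$1 = 0 \<and> B$2$2 = 0"
    using pcommute unfolding pcommute_J0_iff by blast
  then show ?thesis
  proof cases
    case 1
    let ?e = "vector [1, 0] :: complex^2"
    have "A *v ?e = A$1$1 *s ?e" "B *v ?e = B$1$1 *s ?e" "?e \<noteq> 0"
      using 1 by (simp_all add: mat2_simps)
    then show ?thesis
      unfolding irreducible2_def by blast
  next
    case 2
    then show ?thesis
      using diagonal_antidiagonal_pcommute[of A B T] det traces by auto
  next
    case 3
    then have "pcommute B A"
      using diagonal_antidiagonal_pcommute[of B A T] det traces by auto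
    then show ?thesis
      by (simp add: pcommute_sym)
  next
    case 4
    then show ?thesis
      using antidiagonal_pcommute[of A B T] det traces by auto
  qed
qed

lemma psl_class_eq_iff: "psl_class X = psl_class Y \<longleftrightarrow> X = Y \<or> X = - Y"
  unfolding psl_class_def by (auto simp: doubleton_eq_iff)

lemma centraliser_img_iff:
  assumes "det A = 1" "det B = 1"
  shows "c \<in> centraliser_img A B \<longleftrightarrow> (\<exists>X. c = psl_class X \<and> det X = 1 \<and> pcommute X A \<and> pcommute X B)"
proof
  assume "c \<in> centraliser_img A B"
  then obtain X where X: "c = psl_class X" "det X = 1"
    "\<And>w. surface_word w \<Longrightarrow> pcommute X (eval (surf_assign A B) w)"
    unfolding centraliser_img_def SL2_def pcommute_def by blast
  have "eval (surf_assign A B) [(Ga, False)] = A" "eval (surf_assign A B) [(Gb, False)] = B"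
    by (simp_all add: surf_assign_def)
  then show "\<exists>X. c = psl_class X \<and> det X = 1 \<and> pcommute X A \<and> pcommute X B"
    using X surface_word_singleton by (metis insertCI)
next
  assume "\<exists>X. c = psl_class X \<and> det X = 1 \<and> pcommute X A \<and> pcommute X B"
  then obtain X where X: "c = psl_class X" "det X = 1" "pcommute X A" "pcommute X B"
    by blast
  have "pcommute X (eval (surf_assign A B) w)" if "surface_word w" for w
  proof (rule pcommute_eval)
    show "sl_valued (surf_assign A B)"
      using assms by (rule sl_valued_surf_assign)
    fix g
    assume "g \<in> letters w"
    then have "g \<in> {Ga, Gb}"
      using letters_surface_word that by blast
    then show "pcommute X (surf_assign A B g)"
      using X by (auto simp: surf_assign_def)
  qed
  then show "c \<in> centraliser_img A B"
    unfolding centraliser_img_def SL2_def using X unfolding pcommute_def by blast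
qed

locale pcentraliser_order_two =
  fixes A B C :: mat2
  assumes det_A: "det A = 1" and det_B: "det B = 1" and irreducible: "irreducible2 A B"
    and det_C: "det C = 1" and C_nontrivial: "C \<noteq> mat 1" "C \<noteq> - mat 1"
    and pcommute_C: "pcommute C A" "pcommute C B"
    and pcentraliser: "\<And>Y. det Y = 1 \<Longrightarrow> pcommute Y A \<Longrightarrow> pcommute Y B \<Longrightarrow> Y \<in> {mat 1, - mat 1, C, - C}"
begin

lemma C_square: "C ** C = - mat 1"
proof -
  have "pcommute (C ** C) X" if "pcommute C X" for X
    using that by (simp add: pcommute_sym pcommute_mult)
  then have "C ** C \<in> {mat 1, - mat 1, C, - C}"
    using pcentraliser det_C pcommute_C by (simp add: det_mul)
  moreover have "C ** C \<noteq> mat 1"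
    using SL2_square_eq_1 det_C C_nontrivial by blast
  moreover have "C ** C \<noteq> C" "C ** C \<noteq> - C"
  proof -
    have "adj2 C ** (C ** C) = C"
      using det_C by simp
    moreover have "adj2 C ** C = mat 1"
      using det_C by simp
    ultimately show "C ** C \<noteq> C" "C ** C \<noteq> - C"
      using C_nontrivial by auto
  qed
  ultimately show ?thesis
    by blast
qed

lemma not_pcommute_A_B: "\<not> pcommute A B"
proof
  assume "pcommute A B"
  then have "A \<in> {mat 1, - mat 1, C, - C}" "B \<in> {mat 1, - mat 1, C, - C}"
    using pcentraliser det_A det_B by (simp_all add: pcommute_refl pcommute_sym)
  moreover obtain l where "l\<^sup>2 - trace C * l + det C = 0"
    using quadratic_root_exists by blast
  then obtain v where "v \<noteq> 0" "C *v v = l *s v"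
    using eigenvector2_exists by blast
  moreover have "mat 1 *v v = 1 *s v" "(- mat 1) *v v = (- 1) *s v" "(- C) *v v = (- l) *s v"
    using \<open>C *v v = l *s v\<close>[symmetric] by (auto simp: mat2_simps)
  ultimately have "\<exists>a. A *v v = a *s v" "\<exists>b. B *v v = b *s v"
    using \<open>C *v v = l *s v\<close> by blast+
  then show False
    using irreducible \<open>v \<noteq> 0\<close> unfolding irreducible2_def by blast
qed

lemma trace_squares_differ:
  assumes det_T: "det T = 1"
  shows "\<exists>W\<in>{mat 1, A, B, A ** B, B ** A}. (trace (T ** W))\<^sup>2 \<noteq> (trace (T ** W ** C))\<^sup>2"
proof (rule ccontr)
  assume "\<not> ?thesis"
  then have traces: "(trace (T ** W))\<^sup>2 = (trace (T ** W ** C))\<^sup>2" if "W \<in> {mat 1, A, B, A ** B, B ** A}" for W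
    using that by blast
  obtain P where P: "det P = 1" "conj2 P C = J0"
    using SL2_conj_J0[OF det_C C_square] by blast
  have "pcommute (conj2 P A) (conj2 P B) \<or> \<not> irreducible2 (conj2 P A) (conj2 P B)"
  proof (rule J0_equal_trace_squares)
    show "det (conj2 P A) = 1" "det (conj2 P B) = 1" "det (conj2 P T) = 1"
      using P(1) det_A det_B det_T by simp_all
    show "pcommute J0 (conj2 P A)" "pcommute J0 (conj2 P B)"
      using conj2_pcommute_iff[OF P(1)] pcommute_C P(2) by metis+
    fix W'
    assume "W' \<in> {mat 1, conj2 P A, conj2 P B, conj2 P A ** conj2 P B, conj2 P B ** conj2 P A}"
    also have "{mat 1, conj2 P A, conj2 P B, conj2 P A ** conj2 P B, conj2 P B ** conj2 P A}
        = conj2 P ` {mat 1, A, B, A ** B, B ** A}"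
      using P(1) by (simp add: conj2_mult)
    finally obtain W where "W \<in> {mat 1, A, B, A ** B, B ** A}" "W' = conj2 P W"
      by blast
    moreover have "conj2 P T ** conj2 P W ** J0 = conj2 P (T ** W ** C)"
      using P(1) by (simp add: conj2_mult flip: P(2))
    ultimately show "(trace (conj2 P T ** W'))\<^sup>2 = (trace (conj2 P T ** W' ** J0))\<^sup>2"
      using traces P(1) by (simp add: conj2_mult[symmetric])
  qed
  then show False
    using not_pcommute_A_B irreducible irreducible2_conj2 conj2_pcommute_iff P(1) by blast
qed

end

lemma ex_pcentraliser_order_two:
  assumes irr: "irreducible2 A B" and det: "det A = 1" "det B = 1"
    and card: "card (centraliser_img A B) = 2"
  shows "\<exists>C. pcentraliser_order_two A B C"
proof -
  have one: "psl_class (mat 1) \<in> centraliser_img A B"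
    unfolding centraliser_img_iff[OF det] by (auto simp: pcommute_def)
  moreover have "centraliser_img A B \<noteq> {psl_class (mat 1)}"
    using card by auto
  ultimately obtain c where "c \<in> centraliser_img A B" and c_ne: "c \<noteq> psl_class (mat 1)"
    by blast
  have c: "centraliser_img A B = {psl_class (mat 1), c}"
    using card one \<open>c \<in> centraliser_img A B\<close> c_ne
    by (intro card_subset_eq[symmetric]) (auto intro: card_ge_0_finite)
  then obtain C where C: "c = psl_class C" "det C = 1" "pcommute C A" "pcommute C B"
    using centraliser_img_iff[OF det] by blast
  show ?thesis
  proof (intro exI[of _ C], unfold_locales)
    show "C \<noteq> mat 1" "C \<noteq> - mat 1"
      using c_ne C(1) psl_class_eq_iff by auto
    show "Y \<in> {mat 1, - mat 1, C, - C}" if "det Y = 1" "pcommute Y A" "pcommute Y B" for Y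
      using that c C(1) centraliser_img_iff[OF det, of "psl_class Y"]
      by (auto simp: psl_class_eq_iff)
  qed (use C irr det in auto)
qed

section \<open>The fibre of the restriction map\<close>

lemma pcommute_of_conj2:
  assumes det: "det S = 1" "det T = 1"
    and conj: "conj2 S X = conj2 T X \<or> conj2 S X = - conj2 T X"
  shows "pcommute (S ** adj2 T) X"
proof -
  have "X ** (S ** adj2 T) = S ** conj2 S X ** adj2 T"
    using det(1) by (simp add: conj2_def matrix_mul_assoc)
  moreover have "(S ** adj2 T) ** X = S ** conj2 T X ** adj2 T"
    using det(2) by (simp add: conj2_def matrix_mul_assoc)
  ultimately show ?thesis
    using conj unfolding pcommute_def by auto
qed

lemma eval_inverse_automorphism:
  assumes aut: "is_aut_F2 \<phi>" and sl: "sl_valued f"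
  obtains \<psi> where "\<And>g. g \<in> {Ga, Gb} \<Longrightarrow> surface_word (\<psi> g)"
    "\<And>g. g \<in> {Ga, Gb} \<Longrightarrow> eval (\<lambda>g. eval f (\<phi> g)) (\<psi> g) = f g"
proof -
  obtain \<psi> where \<psi>: "surface_word (\<psi> Ga)" "surface_word (\<psi> Gb)"
    "\<forall>g\<in>{Ga, Gb}. red (wsubst \<phi> (\<psi> g)) = [(g, False)]"
    using aut unfolding is_aut_F2_def by blast
  have "eval (\<lambda>g. eval f (\<phi> g)) (\<psi> g) = f g" if "g \<in> {Ga, Gb}" for g
  proof -
    have "eval (\<lambda>g. eval f (\<phi> g)) (\<psi> g) = eval f (red (wsubst \<phi> (\<psi> g)))"
      using sl by (simp add: eval_wsubst eval_red)
    then show ?thesis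
      using \<psi>(3) that by auto
  qed
  then show ?thesis
    using that \<psi>(1,2) by blast
qed

lemma pchar_M_assign_uminus:
  assumes "det A = 1" "det B = 1" "det T = 1"
  shows "pchar_M (assign A B (- T)) = pchar_M (assign A B T)"
proof -
  have "assign A B (- T) = sign_twist (\<lambda>g. g = Gt) (assign A B T)"
    by (rule ext) (simp add: sign_twist_apply assign_def split: gen.split)
  then show ?thesis
    using pchar_M_sign_twist sl_valued_assign assms by metis
qed

locale bundle_fibre = pcentraliser_order_two +
  fixes \<phi> :: "gen \<Rightarrow> word" and T0 :: mat2
  assumes aut: "is_aut_F2 \<phi>" and rep_T0: "psl_rep_M \<phi> (assign A B T0)"
begin

definition csign :: "gen \<Rightarrow> bool" where
  "csign g \<longleftrightarrow> (g = Ga \<and> C ** A \<noteq> A ** C) \<or> (g = Gb \<and> C ** B \<noteq> B ** C)"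

lemma surface_word_\<phi>: "g \<in> {Ga, Gb} \<Longrightarrow> surface_word (\<phi> g)"
  using aut unfolding is_aut_F2_def by auto

lemma surface_words_\<phi>: "surface_word (\<phi> Ga)" "surface_word (\<phi> Gb)"
  by (simp_all add: surface_word_\<phi>)

lemma det_T0: "det T0 = 1"
  using sl_valued_if_psl_rep_M[OF rep_T0] unfolding sl_valued_def by (metis assign_simps(3))

lemma sl_valued_surf: "sl_valued (surf_assign A B)"
  using det_A det_B by (rule sl_valued_surf_assign)

lemma eval_assign_\<phi>: "g \<in> {Ga, Gb} \<Longrightarrow> eval (assign A B T) (\<phi> g) = eval (surf_assign A B) (\<phi> g)"
  using surface_word_\<phi> eval_assign_surface_word by blast

lemma relator_sign_assign_uminus:
  "g \<in> {Ga, Gb} \<Longrightarrow> relator_sign \<phi> (assign A B (- T)) g = relator_sign \<phi> (assign A B T) g"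
  using eval_assign_\<phi>[of g "- T"] eval_assign_\<phi>[of g T] by (auto simp: relator_sign_def conj2_def)

lemma assign_relation:
  "psl_rep_M \<phi> (assign A B T) \<Longrightarrow> g \<in> {Ga, Gb} \<Longrightarrow> conj2 T (assign A B T g) =
    (if relator_sign \<phi> (assign A B T) g then - eval (surf_assign A B) (\<phi> g) else eval (surf_assign A B) (\<phi> g))"
  using psl_rep_M_relation[of \<phi> "assign A B T" g] eval_assign_\<phi> by simp

lemma csign_nonzero: "csign Ga \<or> csign Gb"
  using irreducible2_not_commute[OF irreducible det_C C_nontrivial] by (simp add: csign_def)

lemma conj2_C_generator:
  "g \<in> {Ga, Gb} \<Longrightarrow> conj2 C (assign A B T g) = (if csign g then - assign A B T g else assign A B T g)"
  using conj2_pcommute_sign[OF det_C] pcommute_C by (auto simp: csign_def)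

lemma conj2_C_eval:
  assumes "surface_word w"
  shows "conj2 C (eval (surf_assign A B) w) =
    (if wpar csign w then - eval (surf_assign A B) w else eval (surf_assign A B) w)"
proof -
  have "conj2 C (eval (surf_assign A B) w) = eval (conj_assign C (surf_assign A B)) w"
    using eval_conj_assign[OF sl_valued_surf det_C] by simp
  also have "\<dots> = eval (sign_twist csign (surf_assign A B)) w"
  proof (rule eval_cong)
    fix g
    assume "g \<in> letters w"
    then have "g \<in> {Ga, Gb}"
      using letters_surface_word assms by blast
    then show "conj_assign C (surf_assign A B) g = sign_twist csign (surf_assign A B) g"
      using conj2_C_generator[of g "mat 1"]
      by (auto simp: conj_assign_apply sign_twist_apply surf_assign_def assign_def)
  qed
  finally show ?thesis
    using eval_sign_twist[OF sl_valued_surf] by simp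
qed

lemma psl_rep_M_C_T0:
  "psl_rep_M \<phi> (assign A B (C ** T0)) \<and> (\<forall>g\<in>{Ga, Gb}.
     relator_sign \<phi> (assign A B (C ** T0)) g = (relator_sign \<phi> (assign A B T0) g \<noteq> csign g))"
proof (rule psl_rep_M_of_relation)
  show "sl_valued (assign A B (C ** T0))"
    using det_A det_B det_C det_T0 by (simp add: sl_valued_assign det_mul)
  fix g :: gen
  assume g: "g \<in> {Ga, Gb}"
  have "conj2 (C ** T0) (assign A B (C ** T0) g) = conj2 T0 (conj2 C (assign A B T0 g))"
    using g by (auto simp: conj2_conj2)
  also have "\<dots> = (if relator_sign \<phi> (assign A B T0) g \<noteq> csign g
      then - eval (surf_assign A B) (\<phi> g) else eval (surf_assign A B) (\<phi> g))"
    using assign_relation[OF rep_T0 g] conj2_C_generator[OF g] by auto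
  finally show "conj2 (assign A B (C ** T0) Gt) (assign A B (C ** T0) g) =
    (if relator_sign \<phi> (assign A B T0) g \<noteq> csign g
     then - eval (assign A B (C ** T0)) (\<phi> g) else eval (assign A B (C ** T0)) (\<phi> g))"
    using eval_assign_\<phi>[OF g] by simp
qed

lemma assign_unique:
  assumes rep: "psl_rep_M \<phi> (assign A B T)"
  shows "T \<in> {T0, - T0, C ** T0, - (C ** T0)}"
proof -
  have det_T: "det T = 1"
    using sl_valued_if_psl_rep_M[OF rep] unfolding sl_valued_def by (metis assign_simps(3))
  have pc: "pcommute (T ** adj2 T0) (assign A B T0 g)" if "g \<in> {Ga, Gb}" for g
    using assign_relation[OF rep that] assign_relation[OF rep_T0 that] that
    by (intro pcommute_of_conj2[OF det_T det_T0]) (auto split: if_splits)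
  have "T ** adj2 T0 \<in> {mat 1, - mat 1, C, - C}"
    using pcentraliser[of "T ** adj2 T0"] pc[of Ga] pc[of Gb] det_T det_T0 by (simp add: det_mul)
  moreover have "T = (T ** adj2 T0) ** T0"
    using det_T0 by (simp flip: matrix_mul_assoc)
  ultimately show ?thesis
    by auto
qed

lemma pcommute_generators_if_pcommute_\<phi>:
  assumes "\<And>g. g \<in> {Ga, Gb} \<Longrightarrow> pcommute K (eval (surf_assign A B) (\<phi> g))"
  shows "pcommute K A" "pcommute K B"
proof -
  have "pcommute K (eval (\<lambda>g. eval (assign A B T0) (\<phi> g)) w)" if "surface_word w" for w
  proof (rule pcommute_eval)
    show "sl_valued (\<lambda>g. eval (assign A B T0) (\<phi> g))"
      using det_A det_B det_T0 by (intro sl_valued_eval sl_valued_assign)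
    fix g
    assume "g \<in> letters w"
    then have "g \<in> {Ga, Gb}"
      using letters_surface_word that by blast
    then show "pcommute K (eval (assign A B T0) (\<phi> g))"
      using assms eval_assign_\<phi> by simp
  qed
  moreover obtain \<psi> where "\<And>g. g \<in> {Ga, Gb} \<Longrightarrow> surface_word (\<psi> g)"
    "\<And>g. g \<in> {Ga, Gb} \<Longrightarrow> eval (\<lambda>g. eval (assign A B T0) (\<phi> g)) (\<psi> g) = assign A B T0 g"
    using eval_inverse_automorphism[OF aut sl_valued_assign[OF det_A det_B det_T0]] by metis
  ultimately show "pcommute K A" "pcommute K B"
    by (metis assign_simps(1) insertCI, metis assign_simps(2) insertCI)
qed

lemma conj2_conj2_T0_C_\<phi>:
  assumes g: "g \<in> {Ga, Gb}"
  shows "conj2 (conj2 T0 C) (eval (surf_assign A B) (\<phi> g)) =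
    (if csign g then - eval (surf_assign A B) (\<phi> g) else eval (surf_assign A B) (\<phi> g))"
proof -
  have "T0 ** conj2 T0 C = C ** T0"
    using det_T0 by (simp add: conj2_def matrix_mul_assoc)
  then have "conj2 (conj2 T0 C) (conj2 T0 X) = conj2 T0 (conj2 C X)" for X
    by (simp add: conj2_conj2)
  moreover have "eval (surf_assign A B) (\<phi> g) = (if relator_sign \<phi> (assign A B T0) g
      then - conj2 T0 (assign A B T0 g) else conj2 T0 (assign A B T0 g))"
    using assign_relation[OF rep_T0 g] by auto
  ultimately show ?thesis
    using conj2_C_generator[OF g, of T0] by auto
qed

text \<open>By the relations \<open>\<phi>(g) = \<plusminus> T0\<^sup>-\<^sup>1 g T0\<close>, \<open>T0\<^sup>-\<^sup>1 C T0\<close> commutes up to sign with \<open>\<phi>(a)\<close>, \<open>\<phi>(b)\<close>,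
  hence with \<open>a\<close>, \<open>b\<close>.\<close>
lemma conj2_T0_C: "conj2 T0 C = C \<or> conj2 T0 C = - C"
proof -
  have det_K: "det (conj2 T0 C) = 1"
    using det_C det_T0 by simp
  then have "pcommute (conj2 T0 C) (eval (surf_assign A B) (\<phi> g))" if "g \<in> {Ga, Gb}" for g
    using conj2_conj2_T0_C_\<phi>[OF that] pcommute_iff_conj2 by auto
  then have "conj2 T0 C \<in> {mat 1, - mat 1, C, - C}"
    using pcentraliser det_K pcommute_generators_if_pcommute_\<phi> by blast
  moreover have "conj2 T0 C \<noteq> mat 1" "conj2 T0 C \<noteq> - mat 1"
    using C_nontrivial conj2_inj[OF det_T0, of C "mat 1"] conj2_inj[OF det_T0, of C "- mat 1"] det_T0
    by simp_all
  ultimately show ?thesis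
    by blast
qed

lemma csign_\<phi>_invariant:
  assumes g: "g \<in> {Ga, Gb}"
  shows "wpar csign (\<phi> g) = csign g"
proof -
  have "conj2 (conj2 T0 C) X = conj2 C X" for X
    using conj2_T0_C by (auto simp: conj2_def)
  moreover have "- eval (surf_assign A B) (\<phi> g) \<noteq> eval (surf_assign A B) (\<phi> g)"
    using uminus_neq_self2 det_eval[OF sl_valued_surf] by simp
  ultimately show ?thesis
    using conj2_conj2_T0_C_\<phi>[OF g] conj2_C_eval[OF surface_word_\<phi>[OF g]] by (auto split: if_splits)
qed

definition \<chi>0 :: "word \<Rightarrow> complex" where
  "\<chi>0 = pchar_M (assign A B T0)"

definition \<chi>1 :: "word \<Rightarrow> complex" where
  "\<chi>1 = pchar_M (assign A B (C ** T0))"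

lemma \<chi>0_neq_\<chi>1: "\<chi>0 \<noteq> \<chi>1"
proof
  assume eq: "\<chi>0 = \<chi>1"
  obtain W where W: "W \<in> {mat 1, A, B, A ** B, B ** A}" "(trace (T0 ** W))\<^sup>2 \<noteq> (trace (T0 ** W ** C))\<^sup>2"
    using trace_squares_differ[OF det_T0] by blast
  obtain w where w: "surface_word w" "eval (surf_assign A B) w = W"
  proof -
    let ?words = "[[], [(Ga, False)], [(Gb, False)], [(Ga, False), (Gb, False)], [(Gb, False), (Ga, False)]]"
    have "\<forall>w\<in>set ?words. surface_word w"
      by (simp add: surface_word_def letters_def)
    moreover have "W \<in> eval (surf_assign A B) ` set ?words"
      using W(1) by (auto simp: surf_assign_def)
    ultimately show ?thesis
      using that by blast
  qed
  have "trace (C ** T0 ** W) = trace (T0 ** W ** C)"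
    by (metis trace_mul_sym matrix_mul_assoc)
  then have "\<chi>0 ((Gt, False) # w) \<noteq> \<chi>1 ((Gt, False) # w)"
    using W(2) w eval_assign_surface_word unfolding \<chi>0_def \<chi>1_def pchar_M_def by simp
  then show False
    using eq by simp
qed

lemma pchar_M_assign_cases:
  assumes "psl_rep_M \<phi> (assign A B T)"
  shows "pchar_M (assign A B T) = \<chi>0 \<and> T \<in> {T0, - T0} \<or> pchar_M (assign A B T) = \<chi>1 \<and> T \<in> {C ** T0, - (C ** T0)}"
  using assign_unique[OF assms] pchar_M_assign_uminus det_A det_B det_T0 det_C
  unfolding \<chi>0_def \<chi>1_def by (auto simp: det_mul)

lemma fibre_eq: "fibre \<phi> (pchar_S A B) = {\<chi>0, \<chi>1}"
proof
  show "fibre \<phi> (pchar_S A B) \<subseteq> {\<chi>0, \<chi>1}"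
  proof
    fix c
    assume "c \<in> fibre \<phi> (pchar_S A B)"
    then obtain f where f: "psl_rep_M \<phi> f" "c = pchar_M f" "restrS (pchar_M f) = pchar_S A B"
      unfolding fibre_def Xbar_M_def rbar_def by blast
    then obtain T where "psl_rep_M \<phi> (assign A B T)" "pchar_M (assign A B T) = c"
      using psl_rep_M_normal_form[OF irreducible det_A det_B] by metis
    then show "c \<in> {\<chi>0, \<chi>1}"
      using pchar_M_assign_cases by blast
  qed
  show "{\<chi>0, \<chi>1} \<subseteq> fibre \<phi> (pchar_S A B)"
    using rep_T0 psl_rep_M_C_T0 restrS_pchar_M_assign
    unfolding fibre_def Xbar_M_def rbar_def \<chi>0_def \<chi>1_def by blast
qed

text \<open>Sign changes of the generators alter the relator signs by a coboundary, and every lift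
  normalises to such a sign change of \<open>\<plusminus> T\<close>.\<close>
lemma lifts_iff_sign_coboundary:
  assumes rep: "psl_rep_M \<phi> (assign A B T)"
  shows "lifts \<phi> (pchar_M (assign A B T)) \<longleftrightarrow>
    (\<exists>h. \<forall>g\<in>{Ga, Gb}. relator_sign \<phi> (assign A B T) g = sign_coboundary \<phi> h g)"
proof
  assume "lifts \<phi> (pchar_M (assign A B T))"
  then obtain f where f: "sl_rep_M \<phi> f" "pchar_M f = pchar_M (assign A B T)"
    unfolding lifts_def by blast
  then have "psl_rep_M \<phi> f" "\<forall>g\<in>{Ga, Gb}. \<not> relator_sign \<phi> f g"
    by (simp_all add: sl_rep_M_iff)
  moreover have "restrS (pchar_M f) = pchar_S A B"
    using f(2) restrS_pchar_M_assign by simp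
  ultimately obtain T' h where T': "psl_rep_M \<phi> (assign A B T')"
    "pchar_M (assign A B T') = pchar_M (assign A B T)"
    "\<forall>g\<in>{Ga, Gb}. relator_sign \<phi> (assign A B T') g = sign_coboundary \<phi> h g"
    using psl_rep_M_normal_form[OF irreducible det_A det_B] f(2) by (metis (full_types))
  have "T' = T \<or> T' = - T"
    using pchar_M_assign_cases[OF rep] pchar_M_assign_cases[OF T'(1)] T'(2) \<chi>0_neq_\<chi>1 by auto
  then show "\<exists>h. \<forall>g\<in>{Ga, Gb}. relator_sign \<phi> (assign A B T) g = sign_coboundary \<phi> h g"
    using T'(3) relator_sign_assign_uminus by metis
next
  assume "\<exists>h. \<forall>g\<in>{Ga, Gb}. relator_sign \<phi> (assign A B T) g = sign_coboundary \<phi> h g"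
  then obtain h where "\<forall>g\<in>{Ga, Gb}. relator_sign \<phi> (assign A B T) g = sign_coboundary \<phi> h g"
    by blast
  then have "sl_rep_M \<phi> (sign_twist h (assign A B T))"
    using psl_rep_M_sign_twist[OF rep, of h] by (simp add: sl_rep_M_iff)
  moreover have "pchar_M (sign_twist h (assign A B T)) = pchar_M (assign A B T)"
    using pchar_M_sign_twist[OF sl_valued_if_psl_rep_M[OF rep]] .
  ultimately show "lifts \<phi> (pchar_M (assign A B T))"
    unfolding lifts_def by blast
qed

end

section \<open>Mod 2 homology\<close>

lemma wpar_surface_word:
  "surface_word w \<Longrightarrow> wpar h w = ((h Ga \<and> odd (expsum Ga w)) \<noteq> (h Gb \<and> odd (expsum Gb w)))"
proof (induction w)
  case Nil
  then show ?case by (simp add: wpar_def expsum_def)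
next
  case (Cons x xs)
  then have "fst x \<in> {Ga, Gb}" "surface_word xs"
    by (auto simp: surface_word_def letters_def)
  then show ?case
    using Cons.IH by (cases "snd x") (auto simp: wpar_def expsum_def)
qed

definition xor2 :: "bool \<times> bool \<Rightarrow> bool \<times> bool \<Rightarrow> bool \<times> bool" where
  "xor2 u v = (fst u \<noteq> fst v, snd u \<noteq> snd v)"

text \<open>The matrix \<open>[[p, q], [r, s]]\<close> over \<open>\<int>/2\<close>, with \<open>\<noteq>\<close> as addition.\<close>
definition mod2_matrix :: "bool \<Rightarrow> bool \<Rightarrow> bool \<Rightarrow> bool \<Rightarrow> bool \<times> bool \<Rightarrow> bool \<times> bool" where
  "mod2_matrix p q r s v = ((fst v \<and> p) \<noteq> (snd v \<and> q), (fst v \<and> r) \<noteq> (snd v \<and> s))"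

text \<open>An invertible map \<open>N\<close> with a nonzero fixed vector \<open>v\<close> is the identity or the transvection
  along \<open>v\<close>, whose fixed space and the image of \<open>1 + N\<close> are both spanned by \<open>v\<close>.\<close>
lemma mod2_matrix_fixed_vector:
  assumes "(p \<and> s) \<noteq> (q \<and> r)" and "mod2_matrix p q r s v = v" and "v \<noteq> (False, False)"
  shows "mod2_matrix p q r s = id \<or>
    {u. mod2_matrix p q r s u = u} = {(False, False), v} \<and>
    range (\<lambda>u. xor2 u (mod2_matrix p q r s u)) = {(False, False), v}"
proof -
  obtain a b where v: "v = (a, b)"
    by fastforce
  show ?thesis
    using assms unfolding v set_eq_iff image_iff fun_eq_iff
    by (cases p; cases q; cases r; cases s; cases a; cases b)
      (simp_all add: mod2_matrix_def xor2_def all_bool_eq ex_bool_eq)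
qed

text \<open>The action of \<open>\<phi>\<close> on \<open>H\<^sup>1(S; \<int>/2)\<close>, a class being given by its values on \<open>a\<close> and \<open>b\<close>.\<close>
definition mod2_action :: "(gen \<Rightarrow> word) \<Rightarrow> bool \<times> bool \<Rightarrow> bool \<times> bool" where
  "mod2_action \<phi> = mod2_matrix (odd (expsum Ga (\<phi> Ga))) (odd (expsum Gb (\<phi> Ga)))
     (odd (expsum Ga (\<phi> Gb))) (odd (expsum Gb (\<phi> Gb)))"

lemma wpar_mod2_action:
  assumes "surface_word (\<phi> Ga)" "surface_word (\<phi> Gb)"
  shows "(wpar h (\<phi> Ga), wpar h (\<phi> Gb)) = mod2_action \<phi> (h Ga, h Gb)"
  using assms by (simp add: wpar_surface_word mod2_action_def mod2_matrix_def)

lemma card_hom_Z2: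
  assumes "surface_word (\<phi> Ga)" "surface_word (\<phi> Gb)"
  shows "card (hom_Z2 \<phi>) = 2 * card {v. mod2_action \<phi> v = v}"
proof -
  have "(t, x, y) \<in> hom_Z2 \<phi> \<longleftrightarrow> mod2_action \<phi> (x, y) = (x, y)" for t x y
    using wpar_mod2_action[OF assms, of "case_gen x y t", symmetric]
    unfolding hom_Z2_def by (simp add: Let_def)
  then have "hom_Z2 \<phi> = UNIV \<times> {v. mod2_action \<phi> v = v}"
    by auto
  then show ?thesis
    by (simp add: card_cartesian_product)
qed

lemma odd_det_mod2_action:
  assumes "ab_det \<phi> = 1"
  shows "(odd (expsum Ga (\<phi> Ga)) \<and> odd (expsum Gb (\<phi> Gb))) \<noteq>
    (odd (expsum Gb (\<phi> Ga)) \<and> odd (expsum Ga (\<phi> Gb)))"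
proof -
  have "odd (expsum Ga (\<phi> Ga) * expsum Gb (\<phi> Gb) - expsum Gb (\<phi> Ga) * expsum Ga (\<phi> Gb))"
    using assms unfolding ab_det_def by simp
  then show ?thesis
    by auto
qed

lemma b1_eq: "card (hom_Z2 \<phi>) = 2 ^ k \<Longrightarrow> b1 \<phi> = k"
  unfolding b1_def by (rule the_equality) (auto dest: power_inject_exp[of 2, THEN iffD1])

lemma b1_eq_Suc:
  assumes "surface_word (\<phi> Ga)" "surface_word (\<phi> Gb)" "card {v. mod2_action \<phi> v = v} = 2 ^ k"
  shows "b1 \<phi> = Suc k"
proof (rule b1_eq)
  show "card (hom_Z2 \<phi>) = 2 ^ Suc k"
    using card_hom_Z2[OF assms(1,2)] assms(3) by simp
qed

lemma card_doubleton_filter: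
  assumes "x \<noteq> y"
  shows "card {c \<in> {x, y}. P c} = of_bool (P x) + of_bool (P y)"
proof -
  have "{c \<in> {x, y}. P c} = (if P x then {x} else {}) \<union> (if P y then {y} else {})"
    by auto
  then show ?thesis
    using assms by simp
qed

definition relator_signs :: "(gen \<Rightarrow> word) \<Rightarrow> (gen \<Rightarrow> mat2) \<Rightarrow> bool \<times> bool" where
  "relator_signs \<phi> f = (relator_sign \<phi> f Ga, relator_sign \<phi> f Gb)"

context bundle_fibre
begin

lemma lifts_iff_mod2:
  assumes rep: "psl_rep_M \<phi> (assign A B T)"
  shows "lifts \<phi> (pchar_M (assign A B T)) \<longleftrightarrow>
    relator_signs \<phi> (assign A B T) \<in> range (\<lambda>u. xor2 u (mod2_action \<phi> u))"
proof -
  have "(\<exists>h. \<forall>g\<in>{Ga, Gb}. e g = sign_coboundary \<phi> h g) \<longleftrightarrow>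
      (e Ga, e Gb) \<in> range (\<lambda>u. xor2 u (mod2_action \<phi> u))" for e
  proof -
    have "(\<forall>g\<in>{Ga, Gb}. e g = sign_coboundary \<phi> h g) \<longleftrightarrow>
        (e Ga, e Gb) = xor2 (h Ga, h Gb) (mod2_action \<phi> (h Ga, h Gb))" for h
      using wpar_mod2_action[OF surface_words_\<phi>, of h, symmetric]
      by (simp add: sign_coboundary_def xor2_def)
    moreover have "(h Ga, h Gb) = u" if "h = (\<lambda>g. case g of Ga \<Rightarrow> fst u | Gb \<Rightarrow> snd u | Gt \<Rightarrow> False)" for h u
      using that by simp
    ultimately show ?thesis
      by (metis (no_types, lifting) rangeE rangeI)
  qed
  then show ?thesis
    using lifts_iff_sign_coboundary[OF rep] by (simp add: relator_signs_def)
qed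

lemma relator_signs_C_T0:
  "relator_signs \<phi> (assign A B (C ** T0)) = xor2 (relator_signs \<phi> (assign A B T0)) (csign Ga, csign Gb)"
  using psl_rep_M_C_T0 by (simp add: relator_signs_def xor2_def)

lemma mod2_action_csign: "mod2_action \<phi> (csign Ga, csign Gb) = (csign Ga, csign Gb)"
  using wpar_mod2_action[OF surface_words_\<phi>, of csign] csign_\<phi>_invariant by simp

lemma lifting_dichotomy:
  assumes "ab_det \<phi> = 1"
  shows "(b1 \<phi> = 3 \<and> \<not> (lifts \<phi> \<chi>0 \<and> lifts \<phi> \<chi>1)) \<or> (b1 \<phi> = 2 \<and> (lifts \<phi> \<chi>0 \<longleftrightarrow> lifts \<phi> \<chi>1))"
proof -
  define s e R where "s = (csign Ga, csign Gb)" and "e = relator_signs \<phi> (assign A B T0)"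
    and "R = range (\<lambda>u. xor2 u (mod2_action \<phi> u))"
  have lifts: "lifts \<phi> \<chi>0 \<longleftrightarrow> e \<in> R" "lifts \<phi> \<chi>1 \<longleftrightarrow> xor2 e s \<in> R"
    using lifts_iff_mod2[OF rep_T0] lifts_iff_mod2 psl_rep_M_C_T0 relator_signs_C_T0
    by (simp_all add: \<chi>0_def \<chi>1_def e_def s_def R_def)
  have "s \<noteq> (False, False)"
    using csign_nonzero by (simp add: s_def)
  then have "mod2_action \<phi> = id \<or>
      {u. mod2_action \<phi> u = u} = {(False, False), s} \<and> R = {(False, False), s}"
    using odd_det_mod2_action[OF assms] mod2_action_csign unfolding mod2_action_def R_def s_def
    by (intro mod2_matrix_fixed_vector)
  then show ?thesis
  proof
    assume "mod2_action \<phi> = id"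
    then have "b1 \<phi> = 3"
      using b1_eq_Suc[OF surface_words_\<phi>, of 2]
      by (simp add: card_cartesian_product flip: UNIV_Times_UNIV)
    moreover have "\<not> (e \<in> R \<and> xor2 e s \<in> R)"
      using \<open>mod2_action \<phi> = id\<close> \<open>s \<noteq> (False, False)\<close> by (cases s) (auto simp: R_def xor2_def)
    ultimately show ?thesis
      using lifts by blast
  next
    assume fixed: "{u. mod2_action \<phi> u = u} = {(False, False), s} \<and> R = {(False, False), s}"
    then have "b1 \<phi> = 2"
      using b1_eq_Suc[OF surface_words_\<phi>, of 1] \<open>s \<noteq> (False, False)\<close> by simp
    moreover have "e \<in> R \<longleftrightarrow> xor2 e s \<in> R"
      using fixed \<open>s \<noteq> (False, False)\<close> by (cases e; cases s) (auto simp: xor2_def)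
    ultimately show ?thesis
      using lifts by blast
  qed
qed

end

theorem lemma4p4:
  fixes \<phi> :: "gen \<Rightarrow> word" and A B :: mat2
  assumes "hyperbolic_bundle \<phi>"
    and "A \<in> SL2" and "B \<in> SL2"
    and "irreducible2 A B"
    and "pchar_S A B \<in> rbar ` Xbar_M \<phi>"
    and "card (centraliser_img A B) = 2"
  shows "card (fibre \<phi> (pchar_S A B)) = 2 \<and> b1 \<phi> > 1 \<and>
    ((\<forall>c\<in>fibre \<phi> (pchar_S A B). \<not> lifts \<phi> c)
     \<or> (card {c\<in>fibre \<phi> (pchar_S A B). lifts \<phi> c} = 1 \<and> b1 \<phi> = 3)
     \<or> (card {c\<in>fibre \<phi> (pchar_S A B). lifts \<phi> c} = 2 \<and> b1 \<phi> = 2))"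
proof -
  have aut: "is_aut_F2 \<phi>" and det_\<phi>: "ab_det \<phi> = 1"
    using assms(1) unfolding hyperbolic_bundle_def by auto
  have det: "det A = 1" "det B = 1"
    using assms(2,3) unfolding SL2_def by auto
  obtain C where "pcentraliser_order_two A B C"
    using ex_pcentraliser_order_two[OF assms(4) det assms(6)] by blast
  obtain f where "psl_rep_M \<phi> f" "restrS (pchar_M f) = pchar_S A B"
    using assms(5) unfolding Xbar_M_def rbar_def by (auto simp: image_iff)
  then obtain T0 where "psl_rep_M \<phi> (assign A B T0)"
    using psl_rep_M_normal_form[OF assms(4) det] by metis
  then interpret bundle_fibre A B C \<phi> T0
    using \<open>pcentraliser_order_two A B C\<close> aut by (simp add: bundle_fibre_def bundle_fibre_axioms_def)
  have "card {c \<in> fibre \<phi> (pchar_S A B). lifts \<phi> c} = of_bool (lifts \<phi> \<chi>0) + of_bool (lifts \<phi> \<chi>1)"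
    unfolding fibre_eq using \<chi>0_neq_\<chi>1 by (rule card_doubleton_filter)
  then show ?thesis
    using lifting_dichotomy[OF det_\<phi>] \<chi>0_neq_\<chi>1 by (auto simp: fibre_eq)
qed

end
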